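(* Consider a main effect plan on $n$ runs with factors $F_1,\dots,F_m$ ($m\ge 2$), every level of every factor occurring, which is orthogonal through $F_m$, i.e. $N_{ij}=N_{im}R_m^{-1}N_{mj}$ for all distinct $i,j\in\{1,\dots,m-1\}$. Then: (a) for every $i\in\{1,\dots,m-1\}$, with $\bar i=\{1,\dots,m+1\}\setminus\{i\}$, one has $C_{i;\bar i}=R_i-N_{im}R_m^{-1}N_{im}'$ and $Q_{i;\bar i}=T_i-N_{im}R_m^{-1}T_m$, so the reduced normal equation $C_{i;\bar i}\widehat{\alpha^i}=Q_{i;\bar i}$ for $\alpha^i$ reads $(R_i-N_{im}R_m^{-1}N_{im}')\widehat{\alpha^i}=T_i-N_{im}R_m^{-1}T_m$; (b) the error sum of squares satisfies $$SS_E=SS_{tot}-\sum_{j=1}^{m-1}SS_{j;\{m,m+1\}}-SS_{m;\{m+1\}}.$$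
   Context: Model: $Y=\mathbf 1_n\mu+\sum_{i=1}^m X_i\alpha^i+\epsilon$ with uncorrelated homoscedastic errors, where $X_i$ is the $n\times a_i$ 0-1 design matrix of $F_i$ ($(u,t)$ entry $1$ iff $F_i$ is at level $t$ in run $u$); $X_{m+1}=\mathbf 1_n$. $N_{ij}=X_i'X_j$, $r_i=X_i'\mathbf 1_n$, $R_i=\mathrm{diag}(r_i)$, $T_i=X_i'Y$ (vector of level totals of $F_i$). $P_S$ is the orthogonal projector onto the column space of $[X_j]_{j\in S}$ for $S\subseteq\{1,\dots,m+1\}$. For $i\notin T$: $C_{i;T}=X_i'(I-P_T)X_i$, $Q_{i;T}=X_i'(I-P_T)Y$, $SS_{i;T}=Q_{i;T}'(C_{i;T})^-Q_{i;T}$. $SS_{tot}=\sum_uY_u^2-(\sum_uY_u)^2/n$ and $SS_E=Y'(I-P_{\{1,\dots,m+1\}})Y$. *)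

theory Defs
  imports "Jordan_Normal_Form.Matrix" "Jordan_Normal_Form.Gauss_Jordan_Elimination"
begin

text \<open>Factor i has a i levels
  0..a i - 1, and lev i u is the level of factor i in run u (u < n).
  Index m+1 stands for the general mean (column of ones).\<close>

definition ncols :: "nat \<Rightarrow> (nat \<Rightarrow> nat) \<Rightarrow> nat \<Rightarrow> nat" where
  "ncols m a i = (if i = Suc m then 1 else a i)"

definition Xd :: "nat \<Rightarrow> nat \<Rightarrow> (nat \<Rightarrow> nat) \<Rightarrow> (nat \<Rightarrow> nat \<Rightarrow> nat) \<Rightarrow> nat \<Rightarrow> real mat" where
  "Xd n m a lev i = (if i = Suc m then mat n 1 (\<lambda>_. 1)
      else mat n (a i) (\<lambda>(u,t). if lev i u = t then 1 else 0))"

definition Nmat :: "nat \<Rightarrow> nat \<Rightarrow> (nat \<Rightarrow> nat) \<Rightarrow> (nat \<Rightarrow> nat \<Rightarrow> nat) \<Rightarrow> nat \<Rightarrow> nat \<Rightarrow> real mat" where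
  "Nmat n m a lev i j = transpose_mat (Xd n m a lev i) * Xd n m a lev j"

definition rvec :: "nat \<Rightarrow> nat \<Rightarrow> (nat \<Rightarrow> nat) \<Rightarrow> (nat \<Rightarrow> nat \<Rightarrow> nat) \<Rightarrow> nat \<Rightarrow> real vec" where
  "rvec n m a lev i = transpose_mat (Xd n m a lev i) *\<^sub>v vec n (\<lambda>_. 1)"

definition Rmat :: "nat \<Rightarrow> nat \<Rightarrow> (nat \<Rightarrow> nat) \<Rightarrow> (nat \<Rightarrow> nat \<Rightarrow> nat) \<Rightarrow> nat \<Rightarrow> real mat" where
  "Rmat n m a lev i = mat_diag (ncols m a i) (\<lambda>t. rvec n m a lev i $ t)"

text \<open>R_i^{-1}: inverse of the diagonal matrix R_i (all level counts positive when every level occurs).\<close>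
definition Rinv :: "nat \<Rightarrow> nat \<Rightarrow> (nat \<Rightarrow> nat) \<Rightarrow> (nat \<Rightarrow> nat \<Rightarrow> nat) \<Rightarrow> nat \<Rightarrow> real mat" where
  "Rinv n m a lev i = mat_diag (ncols m a i) (\<lambda>t. 1 / (rvec n m a lev i $ t))"

definition Tvec :: "nat \<Rightarrow> nat \<Rightarrow> (nat \<Rightarrow> nat) \<Rightarrow> (nat \<Rightarrow> nat \<Rightarrow> nat) \<Rightarrow> real vec \<Rightarrow> nat \<Rightarrow> real vec" where
  "Tvec n m a lev Y i = transpose_mat (Xd n m a lev i) *\<^sub>v Y"

definition colspace :: "nat \<Rightarrow> nat \<Rightarrow> (nat \<Rightarrow> nat) \<Rightarrow> (nat \<Rightarrow> nat \<Rightarrow> nat) \<Rightarrow> nat set \<Rightarrow> real vec set" where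
  "colspace n m a lev S = {v. \<exists>c. (\<forall>j\<in>S. c j \<in> carrier_vec (ncols m a j)) \<and>
       v = vec n (\<lambda>u. \<Sum>j\<in>S. (Xd n m a lev j *\<^sub>v c j) $ u)}"

definition Proj :: "nat \<Rightarrow> nat \<Rightarrow> (nat \<Rightarrow> nat) \<Rightarrow> (nat \<Rightarrow> nat \<Rightarrow> nat) \<Rightarrow> nat set \<Rightarrow> real mat" where
  "Proj n m a lev S = (THE P. P \<in> carrier_mat n n \<and>
      (\<forall>v\<in>carrier_vec n. P *\<^sub>v v \<in> colspace n m a lev S \<and>
         (\<forall>w\<in>colspace n m a lev S. (v - P *\<^sub>v v) \<bullet> w = 0)))"

definition Cmat :: "nat \<Rightarrow> nat \<Rightarrow> (nat \<Rightarrow> nat) \<Rightarrow> (nat \<Rightarrow> nat \<Rightarrow> nat) \<Rightarrow> nat \<Rightarrow> nat set \<Rightarrow> real mat" where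
  "Cmat n m a lev i T = transpose_mat (Xd n m a lev i) * (1\<^sub>m n - Proj n m a lev T) * Xd n m a lev i"

definition Qvec :: "nat \<Rightarrow> nat \<Rightarrow> (nat \<Rightarrow> nat) \<Rightarrow> (nat \<Rightarrow> nat \<Rightarrow> nat) \<Rightarrow> real vec \<Rightarrow> nat \<Rightarrow> nat set \<Rightarrow> real vec" where
  "Qvec n m a lev Y i T = transpose_mat (Xd n m a lev i) *\<^sub>v ((1\<^sub>m n - Proj n m a lev T) *\<^sub>v Y)"

definition ginv :: "nat \<Rightarrow> real mat \<Rightarrow> real mat" where
  "ginv k C = (SOME G. G \<in> carrier_mat k k \<and> C * G * C = C)"

definition SSfac :: "nat \<Rightarrow> nat \<Rightarrow> (nat \<Rightarrow> nat) \<Rightarrow> (nat \<Rightarrow> nat \<Rightarrow> nat) \<Rightarrow> real vec \<Rightarrow> nat \<Rightarrow> nat set \<Rightarrow> real" where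
  "SSfac n m a lev Y i T = (let Q = Qvec n m a lev Y i T in
      Q \<bullet> (ginv (ncols m a i) (Cmat n m a lev i T) *\<^sub>v Q))"

definition SStot :: "nat \<Rightarrow> real vec \<Rightarrow> real" where
  "SStot n Y = (\<Sum>u<n. (Y $ u)^2) - (\<Sum>u<n. Y $ u)^2 / real n"

definition SSE :: "nat \<Rightarrow> nat \<Rightarrow> (nat \<Rightarrow> nat) \<Rightarrow> (nat \<Rightarrow> nat \<Rightarrow> nat) \<Rightarrow> real vec \<Rightarrow> real" where
  "SSE n m a lev Y = Y \<bullet> ((1\<^sub>m n - Proj n m a lev {1..Suc m}) *\<^sub>v Y)"

end

theory Submission
  imports Defs
begin

text \<open>Let P_m = X_m R_m^{-1} X_m' be the orthogonal projector onto the column space of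
  [X_m, 1] (the column of ones is the sum of the columns of X_m), and Q_j (Pres j below) the projector onto
  the column space of the adjusted design (I - P_m) X_j. Orthogonality through F_m says exactly
  that X_i'(I - P_m) X_j = 0 for distinct i, j < m, so the Q_j are mutually orthogonal and
  orthogonal to P_m; hence the projector onto the column space of X_j (j in J), X_m and 1 is
  P_m + sum_{j in J} Q_j. Since X_i' annihilates every Q_j with j \<noteq> i, this gives (a).
  For (b), SS_{j;T} equals Y' Q Y for the projector Q onto the column space of (I - P_T) X_j,
  whatever generalized inverse is used; thus SS_{j;{m,m+1}} = Y' Q_j Y,
  SS_{m;{m+1}} = Y'(P_m - P_1) Y with P_1 = (1/n) 1 1' (Pmean), SS_tot = Y'(I - P_1) Y, and (b) is the
  decomposition I - P_{1..m+1} = (I - P_1) - sum_j Q_j - (P_m - P_1).\<close>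

section \<open>Subspaces and orthogonal projections\<close>

lemma scalar_prod_self_eq_0:
  fixes v :: "real vec"
  assumes v: "v \<in> carrier_vec n" and z: "v \<bullet> v = 0"
  shows "v = 0\<^sub>v n"
proof -
  have "(\<Sum>i\<in>{0..<n}. v $ i * v $ i) = 0" using v z by (simp add: scalar_prod_def)
  hence "\<forall>i\<in>{0..<n}. v $ i * v $ i = 0" by (subst sum_nonneg_eq_0_iff[symmetric]) auto
  thus ?thesis using v by (intro eq_vecI) auto
qed

lemma mult_mat_zero_vec:
  "A \<in> carrier_mat nr nc \<Longrightarrow> A *\<^sub>v 0\<^sub>v nc = (0\<^sub>v nr :: 'a :: semiring_0 vec)"
  by (rule eq_vecI) (auto simp: scalar_prod_def)

lemma eq_vec_if_diff_eq_0:
  fixes u w :: "real vec"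
  assumes u: "u \<in> carrier_vec k" and w: "w \<in> carrier_vec k" and d: "u - w = 0\<^sub>v k"
  shows "u = w"
proof (rule eq_vecI)
  fix i assume i: "i < dim_vec w"
  have "(u - w) $ i = 0" using d i w by simp
  thus "u $ i = w $ i" using i u w by simp
qed (use u w in simp)

lemma eq_vec_if_scalar_prod_eq:
  fixes u w :: "real vec"
  assumes u: "u \<in> carrier_vec k" and w: "w \<in> carrier_vec k"
    and eq: "\<And>c. c \<in> carrier_vec k \<Longrightarrow> u \<bullet> c = w \<bullet> c"
  shows "u = w"
proof -
  have "(u - w) \<bullet> (u - w) = 0"
    using eq[of "u - w"] u w by (simp add: minus_scalar_prod_distrib[of _ k])
  hence "u - w = 0\<^sub>v k" by (rule scalar_prod_self_eq_0[rotated]) (use u w in simp)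
  thus ?thesis by (rule eq_vec_if_diff_eq_0[OF u w])
qed

lemma eq_mat_if_mult_vec_eq:
  fixes A B :: "real mat"
  assumes A: "A \<in> carrier_mat r k" and B: "B \<in> carrier_mat r k"
    and eq: "\<And>c. c \<in> carrier_vec k \<Longrightarrow> A *\<^sub>v c = B *\<^sub>v c"
  shows "A = B"
proof (rule eq_matI)
  fix i j assume i: "i < dim_row B" and j: "j < dim_col B"
  have "(A *\<^sub>v unit_vec k j) $ i = (B *\<^sub>v unit_vec k j) $ i" using eq[of "unit_vec k j"] by simp
  thus "A $$ (i, j) = B $$ (i, j)" using A B i j by simp
qed (use A B in auto)

definition subspace_vec :: "nat \<Rightarrow> real vec set \<Rightarrow> bool" where
  "subspace_vec n W \<longleftrightarrow> W \<subseteq> carrier_vec n \<and> 0\<^sub>v n \<in> W \<and>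
     (\<forall>x\<in>W. \<forall>y\<in>W. x + y \<in> W) \<and> (\<forall>c. \<forall>x\<in>W. c \<cdot>\<^sub>v x \<in> W)"

lemma subspace_vecD:
  assumes "subspace_vec n W"
  shows "\<And>x. x \<in> W \<Longrightarrow> x \<in> carrier_vec n" "0\<^sub>v n \<in> W"
    "\<And>x y. x \<in> W \<Longrightarrow> y \<in> W \<Longrightarrow> x + y \<in> W" "\<And>c x. x \<in> W \<Longrightarrow> c \<cdot>\<^sub>v x \<in> W"
  using assms unfolding subspace_vec_def by auto

lemma subspace_vec_minus:
  assumes W: "subspace_vec n W" and x: "x \<in> W" and y: "y \<in> W"
  shows "x - y \<in> W"
proof -
  have "x - y = x + (-1) \<cdot>\<^sub>v y"
    by (rule eq_vecI) (use subspace_vecD(1)[OF W] x y in auto)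
  thus ?thesis using subspace_vecD(3,4)[OF W] x y by simp
qed

definition sum_vec :: "nat \<Rightarrow> 'j set \<Rightarrow> ('j \<Rightarrow> real vec) \<Rightarrow> real vec" where
  "sum_vec n J f = vec n (\<lambda>u. \<Sum>j\<in>J. f j $ u)"

lemma sum_vec_carrier [simp]: "sum_vec n J f \<in> carrier_vec n"
  unfolding sum_vec_def by simp

lemma sum_vec_mem_subspace:
  assumes W: "subspace_vec n W" and J: "finite J" and f: "\<And>j. j \<in> J \<Longrightarrow> f j \<in> W"
  shows "sum_vec n J f \<in> W"
  using J f
proof (induction J rule: finite_induct)
  case empty
  have "sum_vec n {} f = 0\<^sub>v n" by (rule eq_vecI) (simp_all add: sum_vec_def)
  thus ?case using subspace_vecD(2)[OF W] by simp
next
  case (insert j J)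
  have "sum_vec n (insert j J) f = f j + sum_vec n J f"
    by (rule eq_vecI) (use insert subspace_vecD(1)[OF W] in \<open>auto simp: sum_vec_def\<close>)
  thus ?case using insert subspace_vecD(3)[OF W] by simp
qed

lemma sum_vec_eq_0:
  assumes "\<And>j. j \<in> J \<Longrightarrow> f j = 0\<^sub>v n"
  shows "sum_vec n J f = 0\<^sub>v n"
  by (rule eq_vecI) (use assms in \<open>auto simp: sum_vec_def\<close>)

lemma sum_vec_eq_single:
  assumes J: "finite J" "j \<in> J" and f: "f j \<in> carrier_vec n"
    and zero: "\<And>i. i \<in> J \<Longrightarrow> i \<noteq> j \<Longrightarrow> f i = 0\<^sub>v n"
  shows "sum_vec n J f = f j"
  by (rule eq_vecI) (use J f zero in \<open>auto simp: sum_vec_def sum.remove intro!: sum.neutral\<close>)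

lemma sum_vec_add:
  assumes "\<And>j. j \<in> J \<Longrightarrow> f j \<in> carrier_vec n" "\<And>j. j \<in> J \<Longrightarrow> g j \<in> carrier_vec n"
  shows "sum_vec n J f + sum_vec n J g = sum_vec n J (\<lambda>j. f j + g j)"
  by (rule eq_vecI) (use carrier_vecD[OF assms(1)] carrier_vecD[OF assms(2)] in
      \<open>auto simp: sum_vec_def sum.distrib intro!: sum.cong\<close>)

lemma smult_sum_vec:
  assumes "\<And>j. j \<in> J \<Longrightarrow> f j \<in> carrier_vec n"
  shows "t \<cdot>\<^sub>v sum_vec n J f = sum_vec n J (\<lambda>j. t \<cdot>\<^sub>v f j)"
  by (rule eq_vecI) (use carrier_vecD[OF assms] in \<open>auto simp: sum_vec_def sum_distrib_left intro!: sum.cong\<close>)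

lemma mult_sum_vec:
  fixes A :: "real mat"
  assumes A: "A \<in> carrier_mat nr nc" and f: "\<And>j. j \<in> J \<Longrightarrow> f j \<in> carrier_vec nc"
  shows "A *\<^sub>v sum_vec nc J f = sum_vec nr J (\<lambda>j. A *\<^sub>v f j)"
proof (rule eq_vecI)
  fix i assume "i < dim_vec (sum_vec nr J (\<lambda>j. A *\<^sub>v f j))"
  hence i: "i < nr" by (simp add: sum_vec_def)
  have "(A *\<^sub>v sum_vec nc J f) $ i = (\<Sum>j\<in>J. \<Sum>t\<in>{0..<nc}. A $$ (i, t) * f j $ t)"
    using A i by (simp add: sum_vec_def scalar_prod_def sum_distrib_left sum.swap[of _ J])
  also have "\<dots> = sum_vec nr J (\<lambda>j. A *\<^sub>v f j) $ i"
    using A i carrier_vecD[OF f] by (auto simp: sum_vec_def scalar_prod_def intro!: sum.cong)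
  finally show "(A *\<^sub>v sum_vec nc J f) $ i = sum_vec nr J (\<lambda>j. A *\<^sub>v f j) $ i" .
qed (use A in \<open>simp add: sum_vec_def\<close>)

lemma scalar_prod_sum_vec:
  fixes w :: "real vec"
  assumes w: "w \<in> carrier_vec n" and f: "\<And>j. j \<in> J \<Longrightarrow> f j \<in> carrier_vec n"
  shows "w \<bullet> sum_vec n J f = (\<Sum>j\<in>J. w \<bullet> f j)"
proof -
  have "w \<bullet> sum_vec n J f = (\<Sum>j\<in>J. \<Sum>u\<in>{0..<n}. w $ u * f j $ u)"
    by (simp add: sum_vec_def scalar_prod_def sum_distrib_left sum.swap[of _ J])
  also have "\<dots> = (\<Sum>j\<in>J. w \<bullet> f j)"
    by (rule sum.cong) (use carrier_vecD[OF f] in \<open>auto simp: scalar_prod_def\<close>)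
  finally show ?thesis .
qed

definition orth_proj :: "nat \<Rightarrow> real mat \<Rightarrow> real vec set \<Rightarrow> bool" where
  "orth_proj n P W \<longleftrightarrow> P \<in> carrier_mat n n \<and>
     (\<forall>v\<in>carrier_vec n. P *\<^sub>v v \<in> W \<and> (\<forall>w\<in>W. (v - P *\<^sub>v v) \<bullet> w = 0))"

lemma orth_projD:
  assumes "orth_proj n P W"
  shows orth_proj_carrier: "P \<in> carrier_mat n n"
    and orth_proj_range: "\<And>v. v \<in> carrier_vec n \<Longrightarrow> P *\<^sub>v v \<in> W"
    and orth_proj_orth: "\<And>v w. v \<in> carrier_vec n \<Longrightarrow> w \<in> W \<Longrightarrow> (v - P *\<^sub>v v) \<bullet> w = 0"
  using assms unfolding orth_proj_def by auto

lemma orth_proj_fix: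
  assumes P: "orth_proj n P W" and W: "subspace_vec n W" and w: "w \<in> W"
  shows "P *\<^sub>v w = w"
proof -
  have wc: "w \<in> carrier_vec n" using subspace_vecD(1)[OF W w] .
  have "w - P *\<^sub>v w \<in> W" using subspace_vec_minus[OF W w orth_proj_range[OF P wc]] .
  hence "(w - P *\<^sub>v w) \<bullet> (w - P *\<^sub>v w) = 0" by (rule orth_proj_orth[OF P wc])
  hence "w - P *\<^sub>v w = 0\<^sub>v n"
    by (rule scalar_prod_self_eq_0[rotated]) (use wc orth_proj_carrier[OF P] in simp)
  hence "w = P *\<^sub>v w" by (rule eq_vec_if_diff_eq_0[rotated 2]) (use wc orth_proj_carrier[OF P] in simp_all)
  thus ?thesis by simp
qed

lemma orth_proj_scalar_prod_sym:
  assumes P: "orth_proj n P W" and u: "u \<in> carrier_vec n" and v: "v \<in> carrier_vec n"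
  shows "(P *\<^sub>v v) \<bullet> u = v \<bullet> (P *\<^sub>v u)"
proof -
  have Pc: "P \<in> carrier_mat n n" by (rule orth_proj_carrier[OF P])
  have "(P *\<^sub>v v) \<bullet> u = u \<bullet> (P *\<^sub>v v)" using Pc u v by (simp add: comm_scalar_prod[of _ n])
  also have "\<dots> = (P *\<^sub>v u) \<bullet> (P *\<^sub>v v)"
    using orth_proj_orth[OF P u orth_proj_range[OF P v]] Pc u v
    by (simp add: minus_scalar_prod_distrib[of _ n])
  also have "\<dots> = (P *\<^sub>v v) \<bullet> (P *\<^sub>v u)" using Pc u v by (simp add: comm_scalar_prod[of _ n])
  also have "\<dots> = v \<bullet> (P *\<^sub>v u)"
    using orth_proj_orth[OF P v orth_proj_range[OF P u]] Pc u v
    by (simp add: minus_scalar_prod_distrib[of _ n])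
  finally show ?thesis .
qed

lemma orth_proj_unique:
  assumes P: "orth_proj n P W" and P': "orth_proj n P' W" and W: "subspace_vec n W"
  shows "P = P'"
proof (rule eq_mat_if_mult_vec_eq)
  show Pc: "P \<in> carrier_mat n n" and P'c: "P' \<in> carrier_mat n n"
    using orth_proj_carrier[OF P] orth_proj_carrier[OF P'] .
  fix v :: "real vec" assume v: "v \<in> carrier_vec n"
  let ?d = "P *\<^sub>v v - P' *\<^sub>v v"
  have d: "?d \<in> W" using subspace_vec_minus[OF W orth_proj_range[OF P v] orth_proj_range[OF P' v]] .
  have "?d \<bullet> ?d = (v - P' *\<^sub>v v) \<bullet> ?d - (v - P *\<^sub>v v) \<bullet> ?d"
    using Pc P'c v by (simp add: minus_scalar_prod_distrib[of _ n])
  also have "\<dots> = 0" using orth_proj_orth[OF P v d] orth_proj_orth[OF P' v d] by simp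
  finally have "?d = 0\<^sub>v n" by (rule scalar_prod_self_eq_0[rotated]) (use Pc P'c v in simp)
  thus "P *\<^sub>v v = P' *\<^sub>v v" by (rule eq_vec_if_diff_eq_0[rotated 2]) (use Pc P'c v in simp_all)
qed

lemma orth_proj_transpose:
  assumes P: "orth_proj n P W"
  shows "transpose_mat P = P"
proof (rule eq_mat_if_mult_vec_eq)
  have Pc: "P \<in> carrier_mat n n" by (rule orth_proj_carrier[OF P])
  show "transpose_mat P \<in> carrier_mat n n" "P \<in> carrier_mat n n" using Pc by auto
  fix u :: "real vec" assume u: "u \<in> carrier_vec n"
  show "transpose_mat P *\<^sub>v u = P *\<^sub>v u"
  proof (rule eq_vec_if_scalar_prod_eq)
    fix c :: "real vec" assume c: "c \<in> carrier_vec n"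
    show "(transpose_mat P *\<^sub>v u) \<bullet> c = (P *\<^sub>v u) \<bullet> c"
      using transpose_vec_mult_scalar[OF Pc c u] orth_proj_scalar_prod_sym[OF P c u] by simp
  qed (use Pc u in auto)
qed

lemma rank_one_mult_vec:
  assumes y: "y \<in> carrier_vec n" and v: "v \<in> carrier_vec n"
  shows "mat n n (\<lambda>(i, j). y $ i * y $ j / q) *\<^sub>v v = ((y \<bullet> v) / q) \<cdot>\<^sub>v (y :: real vec)"
  by (rule eq_vecI)
    (use v y in \<open>auto simp: scalar_prod_def sum_distrib_left sum_divide_distrib mult_ac intro!: sum.cong\<close>)

lemma orth_proj_rank_one_update:
  assumes P0: "orth_proj n P0 W0" and W0: "subspace_vec n W0" and y: "y \<in> carrier_vec n"
    and y_nz: "y \<noteq> 0\<^sub>v n" and y_orth: "\<And>s. s \<in> W0 \<Longrightarrow> y \<bullet> s = 0"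
  shows "orth_proj n (P0 + mat n n (\<lambda>(i, j). y $ i * y $ j / (y \<bullet> y))) {t \<cdot>\<^sub>v y + s | t s. s \<in> W0}"
    (is "orth_proj n ?P _")
  unfolding orth_proj_def
proof (intro conjI ballI)
  define q where "q = y \<bullet> y"
  have q: "q \<noteq> 0" using scalar_prod_self_eq_0[OF y] y_nz q_def by auto
  have P0c: "P0 \<in> carrier_mat n n" by (rule orth_proj_carrier[OF P0])
  show "?P \<in> carrier_mat n n" using P0c by simp
  fix v :: "real vec" assume v: "v \<in> carrier_vec n"
  have Pv: "?P *\<^sub>v v = P0 *\<^sub>v v + ((y \<bullet> v) / q) \<cdot>\<^sub>v y"
    unfolding q_def using P0c v y rank_one_mult_vec[OF y v] by (simp add: add_mult_distrib_mat_vec[of _ n n])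
  also have "\<dots> = ((y \<bullet> v) / q) \<cdot>\<^sub>v y + P0 *\<^sub>v v" using P0c v y by (auto intro: comm_add_vec)
  finally show "?P *\<^sub>v v \<in> {t \<cdot>\<^sub>v y + s | t s. s \<in> W0}" using orth_proj_range[OF P0 v] by blast
  fix w assume "w \<in> {t \<cdot>\<^sub>v y + s | t s. s \<in> W0}"
  then obtain t s where s: "s \<in> W0" and w: "w = t \<cdot>\<^sub>v y + s" by blast
  have sc: "s \<in> carrier_vec n" using subspace_vecD(1)[OF W0 s] .
  define r where "r = v - P0 *\<^sub>v v"
  have rc: "r \<in> carrier_vec n" unfolding r_def using P0c v by simp
  have "r \<bullet> y = y \<bullet> r" by (rule comm_scalar_prod[OF rc y])
  hence r_y: "r \<bullet> y = y \<bullet> v"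
    using y_orth[OF orth_proj_range[OF P0 v]] P0c v y
    unfolding r_def by (simp add: scalar_prod_minus_distrib[of _ n])
  have r_s: "r \<bullet> s = 0" unfolding r_def by (rule orth_proj_orth[OF P0 v s])
  have "v - ?P *\<^sub>v v = r - ((y \<bullet> v) / q) \<cdot>\<^sub>v y"
    unfolding Pv r_def by (rule eq_vecI) (use P0c v y in auto)
  hence "(v - ?P *\<^sub>v v) \<bullet> w = t * (r \<bullet> y) + r \<bullet> s - (y \<bullet> v) / q * (t * q + y \<bullet> s)"
    unfolding w q_def using rc y sc
    by (simp add: minus_scalar_prod_distrib[of _ n] scalar_prod_add_distrib[of _ n] algebra_simps)
  also have "\<dots> = 0" using r_y r_s y_orth[OF s] q by (simp add: field_simps)
  finally show "(v - ?P *\<^sub>v v) \<bullet> w = 0" .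
qed

lemma orth_proj_extend_orth:
  assumes P0: "orth_proj n P0 W0" and W0: "subspace_vec n W0" and y: "y \<in> carrier_vec n"
    and y_orth: "\<And>s. s \<in> W0 \<Longrightarrow> y \<bullet> s = 0"
  shows "\<exists>P. orth_proj n P {t \<cdot>\<^sub>v y + s | t s. s \<in> W0}"
proof (cases "y = 0\<^sub>v n")
  case True
  have "t \<cdot>\<^sub>v y + s = s" if "s \<in> W0" for t s
    by (rule eq_vecI) (use subspace_vecD(1)[OF W0 that] True in auto)
  hence "{t \<cdot>\<^sub>v y + s | t s. s \<in> W0} = W0" by (auto intro!: exI[of _ 0]) (metis)
  thus ?thesis using P0 by auto
next
  case False
  thus ?thesis using orth_proj_rank_one_update[OF P0 W0 y _ y_orth] by blast
qed

lemma orth_proj_extend: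
  assumes P0: "orth_proj n P0 W0" and W0: "subspace_vec n W0" and x: "x \<in> carrier_vec n"
  shows "\<exists>P. orth_proj n P {t \<cdot>\<^sub>v x + s | t s. s \<in> W0}"
proof -
  define p where "p = P0 *\<^sub>v x"
  have p: "p \<in> W0" unfolding p_def by (rule orth_proj_range[OF P0 x])
  have pc: "p \<in> carrier_vec n" using subspace_vecD(1)[OF W0 p] .
  have y_orth: "(x - p) \<bullet> s = 0" if s: "s \<in> W0" for s
    unfolding p_def by (rule orth_proj_orth[OF P0 x s])
  have "{t \<cdot>\<^sub>v x + s | t s. s \<in> W0} = {t \<cdot>\<^sub>v (x - p) + s | t s. s \<in> W0}"
  proof (intro equalityI subsetI; clarify)
    fix t s assume s: "s \<in> W0"
    have sc: "s \<in> carrier_vec n" using subspace_vecD(1)[OF W0 s] .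
    have "t \<cdot>\<^sub>v x + s = t \<cdot>\<^sub>v (x - p) + (t \<cdot>\<^sub>v p + s)"
      by (rule eq_vecI) (use x pc sc in \<open>auto simp: algebra_simps\<close>)
    moreover have "t \<cdot>\<^sub>v p + s \<in> W0" using subspace_vecD(3,4)[OF W0] p s by blast
    ultimately show "\<exists>t' s'. t \<cdot>\<^sub>v x + s = t' \<cdot>\<^sub>v (x - p) + s' \<and> s' \<in> W0" by blast
  next
    fix t s assume s: "s \<in> W0"
    have sc: "s \<in> carrier_vec n" using subspace_vecD(1)[OF W0 s] .
    have "t \<cdot>\<^sub>v (x - p) + s = t \<cdot>\<^sub>v x + (s - t \<cdot>\<^sub>v p)"
      by (rule eq_vecI) (use x pc sc in \<open>auto simp: algebra_simps\<close>)
    moreover have "s - t \<cdot>\<^sub>v p \<in> W0" using subspace_vec_minus[OF W0 s] subspace_vecD(4)[OF W0 p] by blast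
    ultimately show "\<exists>t' s'. t \<cdot>\<^sub>v (x - p) + s = t' \<cdot>\<^sub>v x + s' \<and> s' \<in> W0" by blast
  qed
  thus ?thesis using orth_proj_extend_orth[OF P0 W0 _ y_orth] x pc by simp
qed

definition lin_span :: "nat \<Rightarrow> 'k set \<Rightarrow> ('k \<Rightarrow> real vec) \<Rightarrow> real vec set" where
  "lin_span n K g = {v. \<exists>c. v = sum_vec n K (\<lambda>k. c k \<cdot>\<^sub>v g k)}"

lemma subspace_lin_span:
  assumes g: "\<And>k. k \<in> K \<Longrightarrow> g k \<in> carrier_vec n"
  shows "subspace_vec n (lin_span n K g)"
  unfolding subspace_vec_def
proof (intro conjI ballI allI)
  show "lin_span n K g \<subseteq> carrier_vec n" by (auto simp: lin_span_def)
  have "sum_vec n K (\<lambda>k. 0 \<cdot>\<^sub>v g k) = 0\<^sub>v n"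
    by (rule sum_vec_eq_0, rule eq_vecI) (use carrier_vecD[OF g] in auto)
  thus "0\<^sub>v n \<in> lin_span n K g" unfolding lin_span_def by (intro CollectI exI[of _ "\<lambda>_. 0"]) simp
next
  fix x y assume "x \<in> lin_span n K g" "y \<in> lin_span n K g"
  then obtain c d where xy: "x = sum_vec n K (\<lambda>k. c k \<cdot>\<^sub>v g k)" "y = sum_vec n K (\<lambda>k. d k \<cdot>\<^sub>v g k)"
    unfolding lin_span_def by blast
  have "x + y = sum_vec n K (\<lambda>k. (c k + d k) \<cdot>\<^sub>v g k)"
    unfolding xy add_smult_distrib_vec by (rule sum_vec_add) (use g in auto)
  thus "x + y \<in> lin_span n K g" unfolding lin_span_def by (intro CollectI exI[of _ "\<lambda>k. c k + d k"])
next
  fix t x assume "x \<in> lin_span n K g"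
  then obtain c where x: "x = sum_vec n K (\<lambda>k. c k \<cdot>\<^sub>v g k)" unfolding lin_span_def by blast
  have "t \<cdot>\<^sub>v x = sum_vec n K (\<lambda>k. (t * c k) \<cdot>\<^sub>v g k)"
    unfolding x smult_smult_assoc[symmetric] by (rule smult_sum_vec) (use g in auto)
  thus "t \<cdot>\<^sub>v x \<in> lin_span n K g" unfolding lin_span_def by (intro CollectI exI[of _ "\<lambda>k. t * c k"])
qed

lemma lin_span_insert:
  assumes K: "finite K" "k \<notin> K" and g: "g k \<in> carrier_vec n"
  shows "lin_span n (insert k K) g = {t \<cdot>\<^sub>v g k + s | t s. s \<in> lin_span n K g}"
proof (intro equalityI subsetI)
  fix x assume "x \<in> lin_span n (insert k K) g"
  then obtain c where x: "x = sum_vec n (insert k K) (\<lambda>k. c k \<cdot>\<^sub>v g k)" unfolding lin_span_def by blast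
  have "x = c k \<cdot>\<^sub>v g k + sum_vec n K (\<lambda>k. c k \<cdot>\<^sub>v g k)"
    unfolding x by (rule eq_vecI) (use K g in \<open>auto simp: sum_vec_def\<close>)
  thus "x \<in> {t \<cdot>\<^sub>v g k + s | t s. s \<in> lin_span n K g}" unfolding lin_span_def by auto
next
  fix x assume "x \<in> {t \<cdot>\<^sub>v g k + s | t s. s \<in> lin_span n K g}"
  then obtain t c where x: "x = t \<cdot>\<^sub>v g k + sum_vec n K (\<lambda>k. c k \<cdot>\<^sub>v g k)"
    unfolding lin_span_def by blast
  have "sum_vec n K (\<lambda>j. c j \<cdot>\<^sub>v g j) = sum_vec n K (\<lambda>j. (c(k := t)) j \<cdot>\<^sub>v g j)"
    unfolding sum_vec_def by (rule arg_cong[of _ _ "vec n"]) (use K in \<open>auto intro!: sum.cong\<close>)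
  hence "x = sum_vec n (insert k K) (\<lambda>j. (c(k := t)) j \<cdot>\<^sub>v g j)"
    unfolding x by (intro eq_vecI) (use K g in \<open>auto simp: sum_vec_def\<close>)
  thus "x \<in> lin_span n (insert k K) g" unfolding lin_span_def by (intro CollectI exI[of _ "c(k := t)"])
qed

lemma orth_proj_lin_span_exists:
  assumes "finite K" and "\<And>k. k \<in> K \<Longrightarrow> g k \<in> carrier_vec n"
  shows "\<exists>P. orth_proj n P (lin_span n K g)"
  using assms
proof (induction K rule: finite_induct)
  case empty
  have "lin_span n {} g = {0\<^sub>v n}" by (simp add: lin_span_def sum_vec_def zero_vec_def)
  moreover have "0\<^sub>m n n *\<^sub>v v = 0\<^sub>v n" if "v \<in> carrier_vec n" for v :: "real vec"
    by (rule eq_vecI) (use that in \<open>auto simp: scalar_prod_def\<close>)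
  ultimately have "orth_proj n (0\<^sub>m n n) (lin_span n {} g)" unfolding orth_proj_def by simp
  thus ?case by blast
next
  case (insert k K)
  have g: "\<And>j. j \<in> K \<Longrightarrow> g j \<in> carrier_vec n" "g k \<in> carrier_vec n" using insert.prems by auto
  then obtain P0 where "orth_proj n P0 (lin_span n K g)" using insert.IH by blast
  from orth_proj_extend[OF this subspace_lin_span[OF g(1)] g(2)]
  show ?case unfolding lin_span_insert[OF insert.hyps, of g, OF g(2)] .
qed

lemma mult3_mat_vec:
  assumes "A \<in> carrier_mat n1 n2" "B \<in> carrier_mat n2 n3" "C \<in> carrier_mat n3 n4" "v \<in> carrier_vec n4"
  shows "(A * B * C) *\<^sub>v v = A *\<^sub>v (B *\<^sub>v (C *\<^sub>v v))"
  by (simp only: assoc_mult_mat_vec[OF mult_carrier_mat[OF assms(1,2)] assms(3,4)]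
      assoc_mult_mat_vec[OF assms(1,2) mult_mat_vec_carrier[OF assms(3,4)]])

lemma one_minus_mult_vec:
  fixes P :: "real mat"
  assumes "P \<in> carrier_mat n n" "w \<in> carrier_vec n"
  shows "(1\<^sub>m n - P) *\<^sub>v w = w - P *\<^sub>v w"
  using assms by (simp add: minus_mult_distrib_mat_vec[of _ n n])

lemma one_minus_mult_mult_vec:
  fixes P A :: "real mat"
  assumes P: "P \<in> carrier_mat n n" and A: "A \<in> carrier_mat n k" and c: "c \<in> carrier_vec k"
  shows "((1\<^sub>m n - P) * A) *\<^sub>v c = A *\<^sub>v c - P *\<^sub>v (A *\<^sub>v c)"
  using assoc_mult_mat_vec[OF minus_carrier_mat[OF P] A c] one_minus_mult_vec[OF P, of "A *\<^sub>v c"] A c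
  by simp

definition col_space :: "real mat \<Rightarrow> real vec set" where
  "col_space A = {A *\<^sub>v c | c. c \<in> carrier_vec (dim_col A)}"

lemma mult_mem_col_space: "c \<in> carrier_vec (dim_col A) \<Longrightarrow> A *\<^sub>v c \<in> col_space A"
  unfolding col_space_def by blast

lemma col_space_eq_lin_span:
  assumes A: "A \<in> carrier_mat n k"
  shows "col_space A = lin_span n {0..<k} (col A)"
proof -
  have expand: "A *\<^sub>v c = sum_vec n {0..<k} (\<lambda>t. c $ t \<cdot>\<^sub>v col A t)" if "c \<in> carrier_vec k" for c
    by (rule eq_vecI) (use A that in \<open>auto simp: sum_vec_def scalar_prod_def mult.commute intro!: sum.cong\<close>)
  show ?thesis
  proof (intro equalityI subsetI)
    fix x assume "x \<in> col_space A"
    then obtain c where "c \<in> carrier_vec k" "x = A *\<^sub>v c" using A unfolding col_space_def by auto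
    thus "x \<in> lin_span n {0..<k} (col A)"
      unfolding lin_span_def using expand by (intro CollectI exI[of _ "\<lambda>t. c $ t"]) simp
  next
    fix x assume "x \<in> lin_span n {0..<k} (col A)"
    then obtain c where x: "x = sum_vec n {0..<k} (\<lambda>t. c t \<cdot>\<^sub>v col A t)" unfolding lin_span_def by blast
    have "x = A *\<^sub>v vec k c" unfolding x expand[OF vec_carrier] by (rule eq_vecI) (simp_all add: sum_vec_def)
    thus "x \<in> col_space A" using A mult_mem_col_space[of "vec k c" A] by simp
  qed
qed

lemma subspace_col_space: "A \<in> carrier_mat n k \<Longrightarrow> subspace_vec n (col_space A)"
  using col_space_eq_lin_span subspace_lin_span[of "{0..<k}" "col A" n] by simp

lemma orth_proj_col_space_exists: "A \<in> carrier_mat n k \<Longrightarrow> \<exists>P. orth_proj n P (col_space A)"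
  using col_space_eq_lin_span orth_proj_lin_span_exists[of "{0..<k}" "col A" n] by simp

section \<open>Generalized inverses and quadratic forms\<close>

lemma orth_proj_col_space_mult:
  fixes C :: "real mat"
  assumes P: "orth_proj n P (col_space C)" and C: "C \<in> carrier_mat n k"
  shows "P * C = C"
proof (rule eq_matI)
  have Pc: "P \<in> carrier_mat n n" by (rule orth_proj_carrier[OF P])
  fix i j assume "i < dim_row C" "j < dim_col C"
  hence i: "i < n" and j: "j < k" using C by auto
  have "col C j = C *\<^sub>v unit_vec k j" by (rule eq_vecI) (use C j in auto)
  hence "P *\<^sub>v col C j = col C j"
    using orth_proj_fix[OF P subspace_col_space[OF C]] mult_mem_col_space[of "unit_vec k j" C] C by simp
  moreover have "(P * C) $$ (i, j) = (P *\<^sub>v col C j) $ i" using Pc C i j by simp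
  ultimately show "(P * C) $$ (i, j) = C $$ (i, j)" using C i j by simp
qed (use orth_proj_carrier[OF P] C in auto)

text \<open>A generalized inverse of C is read off from the projector P onto its column space:
  choosing preimages C b_t = P e_t gives C G = P, and P C = C.\<close>

lemma ginv_exists:
  fixes C :: "real mat"
  assumes C: "C \<in> carrier_mat k k"
  shows "\<exists>G. G \<in> carrier_mat k k \<and> C * G * C = C"
proof -
  obtain P where P: "orth_proj k P (col_space C)" using orth_proj_col_space_exists[OF C] by blast
  have Pc: "P \<in> carrier_mat k k" by (rule orth_proj_carrier[OF P])
  have "\<forall>t. \<exists>b. t < k \<longrightarrow> b \<in> carrier_vec k \<and> P *\<^sub>v unit_vec k t = C *\<^sub>v b"
  proof
    fix t
    have "P *\<^sub>v unit_vec k t \<in> col_space C" using orth_proj_range[OF P] by simp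
    thus "\<exists>b. t < k \<longrightarrow> b \<in> carrier_vec k \<and> P *\<^sub>v unit_vec k t = C *\<^sub>v b"
      using C unfolding col_space_def by auto
  qed
  then obtain b where b: "\<And>t. t < k \<Longrightarrow> b t \<in> carrier_vec k \<and> P *\<^sub>v unit_vec k t = C *\<^sub>v b t"
    by metis
  define G where "G = mat k k (\<lambda>(i, t). b t $ i)"
  have Gc: "G \<in> carrier_mat k k" unfolding G_def by simp
  have "C * G = P"
  proof (rule eq_matI)
    fix i t assume "i < dim_row P" "t < dim_col P"
    hence i: "i < k" and t: "t < k" using Pc by auto
    have "col G t = b t" by (rule eq_vecI) (use b[OF t] t in \<open>auto simp: G_def\<close>)
    hence "(C * G) $$ (i, t) = (C *\<^sub>v b t) $ i" using C Gc i t by simp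
    also have "\<dots> = (P *\<^sub>v unit_vec k t) $ i" using b[OF t] by simp
    also have "\<dots> = P $$ (i, t)" using Pc i t by simp
    finally show "(C * G) $$ (i, t) = P $$ (i, t)" .
  qed (use C Gc Pc in auto)
  thus ?thesis using orth_proj_col_space_mult[OF P C] Gc by auto
qed

lemma ginv_spec:
  assumes "C \<in> carrier_mat k k"
  shows ginv_carrier: "ginv k C \<in> carrier_mat k k" and ginv_mult: "C * ginv k C * C = C"
  using someI_ex[OF ginv_exists[OF assms]] unfolding ginv_def by auto

lemma ginv_quadratic_form_eq_orth_proj:
  fixes A G Q :: "real mat" and Y :: "real vec"
  assumes A: "A \<in> carrier_mat n k" and Y: "Y \<in> carrier_vec n"
    and Q: "orth_proj n Q (col_space A)" and G: "G \<in> carrier_mat k k"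
    and ginv: "transpose_mat A * A * G * (transpose_mat A * A) = transpose_mat A * A"
  shows "(transpose_mat A *\<^sub>v Y) \<bullet> (G *\<^sub>v (transpose_mat A *\<^sub>v Y)) = Y \<bullet> (Q *\<^sub>v Y)"
proof -
  let ?M = "transpose_mat A * A"
  have M: "?M \<in> carrier_mat k k" using A by simp
  have Qc: "Q \<in> carrier_mat n n" by (rule orth_proj_carrier[OF Q])
  obtain b where b: "b \<in> carrier_vec k" and QY: "Q *\<^sub>v Y = A *\<^sub>v b"
    using orth_proj_range[OF Q Y] A unfolding col_space_def by auto
  have Ab: "A *\<^sub>v b \<in> carrier_vec n" using A b by simp
  have Mb: "?M *\<^sub>v b = transpose_mat A *\<^sub>v (A *\<^sub>v b)" using A b by simp
  have normal_eq: "transpose_mat A *\<^sub>v Y = ?M *\<^sub>v b"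
  proof (rule eq_vec_if_scalar_prod_eq)
    fix c :: "real vec" assume c: "c \<in> carrier_vec k"
    have Ac: "A *\<^sub>v c \<in> col_space A" using A c by (intro mult_mem_col_space) simp
    have "(transpose_mat A *\<^sub>v Y) \<bullet> c = Y \<bullet> (A *\<^sub>v c)" by (rule transpose_vec_mult_scalar[OF A c Y])
    also have "\<dots> = (Q *\<^sub>v Y) \<bullet> (A *\<^sub>v c)"
      using orth_proj_orth[OF Q Y Ac] A c Qc Y by (simp add: minus_scalar_prod_distrib[of _ n])
    also have "\<dots> = (?M *\<^sub>v b) \<bullet> c" unfolding QY Mb by (rule transpose_vec_mult_scalar[OF A c Ab, symmetric])
    finally show "(transpose_mat A *\<^sub>v Y) \<bullet> c = (?M *\<^sub>v b) \<bullet> c" .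
  qed (use A M b Y in auto)
  have Mt: "transpose_mat ?M = ?M" using A by (simp add: transpose_mult[of _ k n])
  have "(?M *\<^sub>v b) \<bullet> (G *\<^sub>v (?M *\<^sub>v b)) = b \<bullet> (?M *\<^sub>v (G *\<^sub>v (?M *\<^sub>v b)))"
    using transpose_vec_mult_scalar[OF M _ b, of "G *\<^sub>v (?M *\<^sub>v b)"] Mt G M b by simp
  also have "?M *\<^sub>v (G *\<^sub>v (?M *\<^sub>v b)) = (?M * G * ?M) *\<^sub>v b"
    by (simp only: assoc_mult_mat_vec[OF mult_carrier_mat[OF M G] M b]
        assoc_mult_mat_vec[OF M G mult_mat_vec_carrier[OF M b]])
  also have "\<dots> = ?M *\<^sub>v b" unfolding ginv ..
  also have "b \<bullet> (?M *\<^sub>v b) = (A *\<^sub>v b) \<bullet> (A *\<^sub>v b)"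
    unfolding Mb using comm_scalar_prod[OF b, of "transpose_mat A *\<^sub>v (A *\<^sub>v b)"]
      transpose_vec_mult_scalar[OF A b Ab] A b by simp
  also have "\<dots> = Y \<bullet> (Q *\<^sub>v Y)"
    using orth_proj_orth[OF Q Y orth_proj_range[OF Q Y]] Y Ab unfolding QY
    by (simp add: minus_scalar_prod_distrib[of _ n])
  finally show ?thesis unfolding normal_eq .
qed

lemma orth_proj_compl_idem:
  assumes P: "orth_proj n P W" and W: "subspace_vec n W"
  shows "(1\<^sub>m n - P) * (1\<^sub>m n - P) = 1\<^sub>m n - P"
proof (rule eq_mat_if_mult_vec_eq)
  have Pc: "P \<in> carrier_mat n n" by (rule orth_proj_carrier[OF P])
  have B: "1\<^sub>m n - P \<in> carrier_mat n n" using minus_carrier_mat[OF Pc] by simp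
  show "(1\<^sub>m n - P) * (1\<^sub>m n - P) \<in> carrier_mat n n" "1\<^sub>m n - P \<in> carrier_mat n n" using B by auto
  have resid: "(1\<^sub>m n - P) *\<^sub>v w = w - P *\<^sub>v w" if "w \<in> carrier_vec n" for w
    using that Pc by (simp add: minus_mult_distrib_mat_vec[of _ n n])
  fix v :: "real vec" assume v: "v \<in> carrier_vec n"
  have PP: "P *\<^sub>v (P *\<^sub>v v) = P *\<^sub>v v" using orth_proj_fix[OF P W orth_proj_range[OF P v]] .
  have "((1\<^sub>m n - P) * (1\<^sub>m n - P)) *\<^sub>v v = (1\<^sub>m n - P) *\<^sub>v ((1\<^sub>m n - P) *\<^sub>v v)"
    using B v by simp
  also have "\<dots> = (v - P *\<^sub>v v) - (P *\<^sub>v v - P *\<^sub>v (P *\<^sub>v v))"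
    using Pc v by (simp add: resid mult_minus_distrib_mat_vec[of _ n n])
  also have "\<dots> = (1\<^sub>m n - P) *\<^sub>v v" unfolding PP resid[OF v] by (rule eq_vecI) (use Pc v in auto)
  finally show "((1\<^sub>m n - P) * (1\<^sub>m n - P)) *\<^sub>v v = (1\<^sub>m n - P) *\<^sub>v v" .
qed

lemma ginv_quadratic_form_resid:
  fixes P Q X :: "real mat" and Y :: "real vec"
  assumes P: "orth_proj n P W" and W: "subspace_vec n W" and X: "X \<in> carrier_mat n k"
    and Y: "Y \<in> carrier_vec n" and Q: "orth_proj n Q (col_space ((1\<^sub>m n - P) * X))"
  shows "(transpose_mat X *\<^sub>v ((1\<^sub>m n - P) *\<^sub>v Y)) \<bullet>
      (ginv k (transpose_mat X * (1\<^sub>m n - P) * X) *\<^sub>v (transpose_mat X *\<^sub>v ((1\<^sub>m n - P) *\<^sub>v Y)))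
    = Y \<bullet> (Q *\<^sub>v Y)"
proof -
  let ?B = "1\<^sub>m n - P" and ?C = "transpose_mat X * (1\<^sub>m n - P) * X"
  have Pc: "P \<in> carrier_mat n n" by (rule orth_proj_carrier[OF P])
  have B: "?B \<in> carrier_mat n n" using minus_carrier_mat[OF Pc] by simp
  have Bt: "transpose_mat ?B = ?B"
    using transpose_minus[OF one_carrier_mat Pc] orth_proj_transpose[OF P] by simp
  have At: "transpose_mat (?B * X) = transpose_mat X * ?B"
    using transpose_mult[OF B X] Bt by simp
  have "transpose_mat (?B * X) * (?B * X) = transpose_mat X * (?B * ?B) * X"
    unfolding At using B X by (simp add: assoc_mult_mat[of _ k n _ n _ k])
  hence AA: "transpose_mat (?B * X) * (?B * X) = ?C" unfolding orth_proj_compl_idem[OF P W] .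
  have AY: "transpose_mat (?B * X) *\<^sub>v Y = transpose_mat X *\<^sub>v (?B *\<^sub>v Y)"
    unfolding At using B X Y by simp
  have C: "?C \<in> carrier_mat k k" using B X by simp
  show ?thesis
    using ginv_quadratic_form_eq_orth_proj[of "?B * X" n k Y Q "ginv k ?C"] B X Y Q
      ginv_carrier[OF C] ginv_mult[OF C] unfolding AA AY by simp
qed

section \<open>Column spaces of design matrices\<close>

lemma Xd_carrier: "Xd n m a lev j \<in> carrier_mat n (ncols m a j)"
  unfolding Xd_def ncols_def by auto

lemma dim_Xd [simp]: "dim_row (Xd n m a lev j) = n" "dim_col (Xd n m a lev j) = ncols m a j"
  using Xd_carrier[of n m a lev j] by auto

lemma Xd_mult_zero [simp]: "Xd n m a lev j *\<^sub>v 0\<^sub>v (ncols m a j) = 0\<^sub>v n"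
  by (rule mult_mat_zero_vec[OF Xd_carrier])

lemma transpose_Xd_mult_vec:
  assumes j: "j \<noteq> Suc m" and z: "z \<in> carrier_vec n" and t: "t < a j"
  shows "(transpose_mat (Xd n m a lev j) *\<^sub>v z) $ t = (\<Sum>u\<in>{0..<n}. if lev j u = t then z $ u else 0)"
  using j z t by (auto simp: Xd_def scalar_prod_def intro!: sum.cong)

lemma transpose_Xd_mean_mult_vec:
  assumes z: "z \<in> carrier_vec n"
  shows "transpose_mat (Xd n m a lev (Suc m)) *\<^sub>v z = vec 1 (\<lambda>_. \<Sum>u\<in>{0..<n}. z $ u)"
  by (rule eq_vecI) (use z in \<open>auto simp: Xd_def scalar_prod_def\<close>)

lemma mem_colspace_iff:
  "v \<in> colspace n m a lev S \<longleftrightarrow>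
     (\<exists>c. (\<forall>j\<in>S. c j \<in> carrier_vec (ncols m a j)) \<and> v = sum_vec n S (\<lambda>j. Xd n m a lev j *\<^sub>v c j))"
  unfolding colspace_def sum_vec_def by simp

lemma subspace_colspace: "subspace_vec n (colspace n m a lev S)"
  unfolding subspace_vec_def
proof (intro conjI ballI allI subsetI)
  let ?X = "Xd n m a lev"
  show "x \<in> carrier_vec n" if "x \<in> colspace n m a lev S" for x
    using that unfolding mem_colspace_iff by auto
  have "sum_vec n S (\<lambda>j. ?X j *\<^sub>v 0\<^sub>v (ncols m a j)) = 0\<^sub>v n" by (rule sum_vec_eq_0) simp
  thus "0\<^sub>v n \<in> colspace n m a lev S"
    unfolding mem_colspace_iff by (intro exI[of _ "\<lambda>j. 0\<^sub>v (ncols m a j)"]) simp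
next
  let ?X = "Xd n m a lev"
  fix x y assume "x \<in> colspace n m a lev S" "y \<in> colspace n m a lev S"
  then obtain c d where c: "\<forall>j\<in>S. c j \<in> carrier_vec (ncols m a j)" and d: "\<forall>j\<in>S. d j \<in> carrier_vec (ncols m a j)"
    and xy: "x = sum_vec n S (\<lambda>j. ?X j *\<^sub>v c j)" "y = sum_vec n S (\<lambda>j. ?X j *\<^sub>v d j)"
    unfolding mem_colspace_iff by blast
  have "x + y = sum_vec n S (\<lambda>j. ?X j *\<^sub>v c j + ?X j *\<^sub>v d j)"
    unfolding xy by (rule sum_vec_add) (use c d in \<open>auto intro: mult_mat_vec_carrier[OF Xd_carrier]\<close>)
  also have "\<dots> = sum_vec n S (\<lambda>j. ?X j *\<^sub>v (c j + d j))"
    unfolding sum_vec_def using c d by (auto simp: mult_add_distrib_mat_vec[OF Xd_carrier] intro!: sum.cong)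
  finally show "x + y \<in> colspace n m a lev S"
    unfolding mem_colspace_iff using c d by (intro exI[of _ "\<lambda>j. c j + d j"]) auto
next
  let ?X = "Xd n m a lev"
  fix t x assume "x \<in> colspace n m a lev S"
  then obtain c where c: "\<forall>j\<in>S. c j \<in> carrier_vec (ncols m a j)" and x: "x = sum_vec n S (\<lambda>j. ?X j *\<^sub>v c j)"
    unfolding mem_colspace_iff by blast
  have "t \<cdot>\<^sub>v x = sum_vec n S (\<lambda>j. t \<cdot>\<^sub>v (?X j *\<^sub>v c j))"
    unfolding x by (rule smult_sum_vec) (use c in \<open>auto intro: mult_mat_vec_carrier[OF Xd_carrier]\<close>)
  also have "\<dots> = sum_vec n S (\<lambda>j. ?X j *\<^sub>v (t \<cdot>\<^sub>v c j))"
    unfolding sum_vec_def using c by (auto simp: mult_mat_vec[OF Xd_carrier] intro!: sum.cong)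
  finally show "t \<cdot>\<^sub>v x \<in> colspace n m a lev S"
    unfolding mem_colspace_iff using c by (intro exI[of _ "\<lambda>j. t \<cdot>\<^sub>v c j"]) auto
qed

lemma Xd_mult_mem_colspace:
  assumes S: "finite S" "j \<in> S" and c: "c \<in> carrier_vec (ncols m a j)"
  shows "Xd n m a lev j *\<^sub>v c \<in> colspace n m a lev S"
proof -
  let ?c = "\<lambda>i. if i = j then c else 0\<^sub>v (ncols m a i)"
  have "(Xd n m a lev i *\<^sub>v ?c i) $ u = (if i = j then (Xd n m a lev j *\<^sub>v c) $ u else 0)"
    if "u < n" for i u
    by (cases "i = j") (use that in \<open>simp_all del: index_mult_mat_vec\<close>)
  hence "sum_vec n S (\<lambda>i. Xd n m a lev i *\<^sub>v ?c i) = Xd n m a lev j *\<^sub>v c"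
    by (intro eq_vecI) (use S in \<open>simp_all add: sum_vec_def\<close>)
  thus ?thesis unfolding mem_colspace_iff using c by (intro exI[of _ ?c]) simp
qed

lemma orth_proj_colspaceI:
  fixes P :: "real mat"
  assumes P: "P \<in> carrier_mat n n"
    and range: "\<And>v. v \<in> carrier_vec n \<Longrightarrow> P *\<^sub>v v \<in> colspace n m a lev S"
    and orth: "\<And>v j. v \<in> carrier_vec n \<Longrightarrow> j \<in> S \<Longrightarrow>
       transpose_mat (Xd n m a lev j) *\<^sub>v (v - P *\<^sub>v v) = 0\<^sub>v (ncols m a j)"
  shows "orth_proj n P (colspace n m a lev S)"
  unfolding orth_proj_def
proof (intro conjI ballI)
  fix v :: "real vec" and w assume v: "v \<in> carrier_vec n" and "w \<in> colspace n m a lev S"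
  then obtain c where c: "\<forall>j\<in>S. c j \<in> carrier_vec (ncols m a j)"
    and w: "w = sum_vec n S (\<lambda>j. Xd n m a lev j *\<^sub>v c j)" unfolding mem_colspace_iff by blast
  have r: "v - P *\<^sub>v v \<in> carrier_vec n" using P v by simp
  have "(v - P *\<^sub>v v) \<bullet> w = (\<Sum>j\<in>S. (v - P *\<^sub>v v) \<bullet> (Xd n m a lev j *\<^sub>v c j))"
    unfolding w by (rule scalar_prod_sum_vec[OF r]) (intro carrier_vecI, simp)
  also have "\<dots> = (\<Sum>j\<in>S. (transpose_mat (Xd n m a lev j) *\<^sub>v (v - P *\<^sub>v v)) \<bullet> c j)"
  proof (rule sum.cong)
    fix j assume "j \<in> S"
    thus "(v - P *\<^sub>v v) \<bullet> (Xd n m a lev j *\<^sub>v c j) = (transpose_mat (Xd n m a lev j) *\<^sub>v (v - P *\<^sub>v v)) \<bullet> c j"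
      by (intro transpose_vec_mult_scalar[OF Xd_carrier _ r, symmetric]) (use c in simp)
  qed simp
  also have "\<dots> = 0" using orth[OF v] c by simp
  finally show "(v - P *\<^sub>v v) \<bullet> w = 0" .
qed (use P range in simp_all)

lemma Proj_eq:
  assumes "orth_proj n P (colspace n m a lev S)"
  shows "Proj n m a lev S = P"
  unfolding Proj_def orth_proj_def[symmetric]
proof (rule the_equality)
  show "orth_proj n P (colspace n m a lev S)" by (rule assms)
  fix P' assume "orth_proj n P' (colspace n m a lev S)"
  thus "P' = P" by (rule orth_proj_unique[OF _ assms subspace_colspace])
qed

lemma SSfac_eq_orth_proj:
  assumes PT: "orth_proj n (Proj n m a lev T) (colspace n m a lev T)" and Y: "Y \<in> carrier_vec n"
    and Q: "orth_proj n Q (col_space ((1\<^sub>m n - Proj n m a lev T) * Xd n m a lev i))"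
  shows "SSfac n m a lev Y i T = Y \<bullet> (Q *\<^sub>v Y)"
  unfolding SSfac_def Let_def Qvec_def Cmat_def
  by (rule ginv_quadratic_form_resid[OF PT subspace_colspace Xd_carrier Y Q])

section \<open>Plans orthogonal through the last factor\<close>

locale orthogonal_through_last_factor =
  fixes n m :: nat and a :: "nat \<Rightarrow> nat" and lev :: "nat \<Rightarrow> nat \<Rightarrow> nat"
  assumes two_factors: "m \<ge> 2"
    and lev_range: "\<And>i u. i \<in> {1..m} \<Longrightarrow> u < n \<Longrightarrow> lev i u < a i"
    and all_levels: "\<And>i t. i \<in> {1..m} \<Longrightarrow> t < a i \<Longrightarrow> \<exists>u<n. lev i u = t"
    and orth_through_last: "\<And>i j. i \<in> {1..m-1} \<Longrightarrow> j \<in> {1..m-1} \<Longrightarrow> i \<noteq> j \<Longrightarrow>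
       Nmat n m a lev i j = Nmat n m a lev i m * Rinv n m a lev m * Nmat n m a lev m j"
begin

abbreviation "X \<equiv> Xd n m a lev"
abbreviation "N \<equiv> Nmat n m a lev"
abbreviation "Rm_inv \<equiv> Rinv n m a lev m"

lemma last_factor: "m \<in> {1..m}"
  using two_factors by simp

lemma ncols_factor: "i \<in> {1..m} \<Longrightarrow> ncols m a i = a i"
  unfolding ncols_def by auto

lemma X_carrier: "i \<in> {1..m} \<Longrightarrow> X i \<in> carrier_mat n (a i)"
  using Xd_carrier[of n m a lev i] ncols_factor by simp

lemma N_carrier: "i \<in> {1..m} \<Longrightarrow> j \<in> {1..m} \<Longrightarrow> N i j \<in> carrier_mat (a i) (a j)"
  unfolding Nmat_def using mult_carrier_mat[OF transpose_carrier_mat[THEN iffD2, OF X_carrier] X_carrier] .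

lemma transpose_N: "i \<in> {1..m} \<Longrightarrow> j \<in> {1..m} \<Longrightarrow> transpose_mat (N i j) = N j i"
  unfolding Nmat_def using transpose_mult[OF transpose_carrier_mat[THEN iffD2, OF X_carrier] X_carrier]
  by simp

lemma Rm_inv_carrier: "Rm_inv \<in> carrier_mat (a m) (a m)"
  unfolding Rinv_def using ncols_factor[OF last_factor] by simp

lemma level_count:
  assumes i: "i \<in> {1..m}" and t: "t < a i"
  shows "rvec n m a lev i $ t = (\<Sum>u\<in>{0..<n}. if lev i u = t then 1 else 0)"
  unfolding rvec_def using transpose_Xd_mult_vec[of i m "vec n (\<lambda>_. 1)" n t a lev] i t
  by (simp add: if_distrib cong: if_cong)

lemma level_count_pos:
  assumes i: "i \<in> {1..m}" and t: "t < a i"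
  shows "rvec n m a lev i $ t > 0"
proof -
  obtain u where u: "u < n" "lev i u = t" using all_levels[OF i t] by blast
  have "(1::real) \<le> (\<Sum>u\<in>{0..<n}. if lev i u = t then 1 else 0)"
    using member_le_sum[of u "{0..<n}" "\<lambda>u. if lev i u = t then (1::real) else 0"] u by auto
  thus ?thesis using level_count[OF i t] by simp
qed

lemma N_diag:
  assumes i: "i \<in> {1..m}"
  shows "N i i = Rmat n m a lev i"
proof (rule eq_matI)
  fix s t assume "s < dim_row (Rmat n m a lev i)" "t < dim_col (Rmat n m a lev i)"
  hence s: "s < a i" and t: "t < a i" using ncols_factor[OF i] by (auto simp: Rmat_def mat_diag_def)
  have "N i i $$ (s, t) = (\<Sum>u\<in>{0..<n}. if lev i u = s \<and> lev i u = t then 1 else 0)"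
    unfolding Nmat_def using i s t ncols_factor[OF i]
    by (auto simp: Xd_def scalar_prod_def intro!: sum.cong)
  also have "\<dots> = Rmat n m a lev i $$ (s, t)"
    using level_count[OF i t] s t ncols_factor[OF i] by (auto simp: Rmat_def mat_diag_def intro!: sum.neutral)
  finally show "N i i $$ (s, t) = Rmat n m a lev i $$ (s, t)" .
qed (use ncols_factor[OF i] in \<open>auto simp: Nmat_def Rmat_def mat_diag_def\<close>)

lemma Rmat_mult_Rm_inv: "Rmat n m a lev m * Rm_inv = 1\<^sub>m (a m)"
proof -
  have "mat_diag (a m) (\<lambda>t. rvec n m a lev m $ t * (1 / rvec n m a lev m $ t)) = mat_diag (a m) (\<lambda>_. 1)"
    unfolding mat_diag_def using level_count_pos[OF last_factor] by (force intro!: eq_matI)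
  thus ?thesis unfolding Rmat_def Rinv_def ncols_factor[OF last_factor] by simp
qed

definition Pm :: "real mat" where
  "Pm = X m * Rm_inv * transpose_mat (X m)"

lemma Pm_carrier: "Pm \<in> carrier_mat n n"
  unfolding Pm_def using X_carrier[OF last_factor] Rm_inv_carrier by simp

lemma Pm_mult_vec:
  assumes v: "v \<in> carrier_vec n"
  shows "Pm *\<^sub>v v = X m *\<^sub>v (Rm_inv *\<^sub>v (transpose_mat (X m) *\<^sub>v v))"
  unfolding Pm_def by (rule mult3_mat_vec[OF X_carrier[OF last_factor] Rm_inv_carrier _ v])
    (use X_carrier[OF last_factor] in simp)

lemma transpose_X_Pm:
  assumes i: "i \<in> {1..m}" and v: "v \<in> carrier_vec n"
  shows "transpose_mat (X i) *\<^sub>v (Pm *\<^sub>v v) = (N i m * Rm_inv) *\<^sub>v (transpose_mat (X m) *\<^sub>v v)"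
  unfolding Pm_mult_vec[OF v] Nmat_def
  by (rule mult3_mat_vec[symmetric]) (use X_carrier[OF i] X_carrier[OF last_factor] Rm_inv_carrier v in auto)

lemma transpose_Xm_Pm:
  assumes v: "v \<in> carrier_vec n"
  shows "transpose_mat (X m) *\<^sub>v (Pm *\<^sub>v v) = transpose_mat (X m) *\<^sub>v v"
  using transpose_X_Pm[OF last_factor v] X_carrier[OF last_factor] v
  unfolding N_diag[OF last_factor] Rmat_mult_Rm_inv by simp

lemma transpose_Xm_resid_Pm:
  assumes v: "v \<in> carrier_vec n"
  shows "transpose_mat (X m) *\<^sub>v (v - Pm *\<^sub>v v) = 0\<^sub>v (a m)"
  using transpose_Xm_Pm[OF v] X_carrier[OF last_factor] Pm_carrier v
  by (simp add: mult_minus_distrib_mat_vec[of _ "a m" n])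

text \<open>Every run has exactly one level of the last factor, so the columns of its design
  matrix sum to the column of ones.\<close>

lemma sum_eq_sum_transpose_Xm:
  assumes z: "z \<in> carrier_vec n"
  shows "(\<Sum>u\<in>{0..<n}. z $ u) = (\<Sum>t\<in>{0..<a m}. (transpose_mat (X m) *\<^sub>v z) $ t)"
proof -
  have "(\<Sum>u\<in>{0..<n}. z $ u) = (\<Sum>u\<in>{0..<n}. \<Sum>t\<in>{0..<a m}. if lev m u = t then z $ u else 0)"
    by (rule sum.cong) (use lev_range[OF last_factor] in auto)
  also have "\<dots> = (\<Sum>t\<in>{0..<a m}. (transpose_mat (X m) *\<^sub>v z) $ t)"
    using transpose_Xd_mult_vec[of m m z n _ a lev] z by (simp add: sum.swap[of _ "{0..<n}"])
  finally show ?thesis .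
qed

lemma transpose_Xmean_eq_0:
  assumes z: "z \<in> carrier_vec n" and h: "transpose_mat (X m) *\<^sub>v z = 0\<^sub>v (a m)"
  shows "transpose_mat (X (Suc m)) *\<^sub>v z = 0\<^sub>v 1"
  using sum_eq_sum_transpose_Xm[OF z] transpose_Xd_mean_mult_vec[OF z] h by (auto intro!: eq_vecI)

lemma orth_proj_Pm: "orth_proj n Pm (colspace n m a lev {m, Suc m})"
proof (rule orth_proj_colspaceI[OF Pm_carrier])
  fix v :: "real vec" assume v: "v \<in> carrier_vec n"
  show "Pm *\<^sub>v v \<in> colspace n m a lev {m, Suc m}"
    unfolding Pm_mult_vec[OF v]
    by (rule Xd_mult_mem_colspace) (use v Rm_inv_carrier X_carrier[OF last_factor] ncols_factor[OF last_factor] in auto)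
  fix j assume "j \<in> {m, Suc m}"
  thus "transpose_mat (X j) *\<^sub>v (v - Pm *\<^sub>v v) = 0\<^sub>v (ncols m a j)"
    using transpose_Xm_resid_Pm[OF v] transpose_Xmean_eq_0[of "v - Pm *\<^sub>v v"] Pm_carrier v
      ncols_factor[OF last_factor] by (auto simp: ncols_def)
qed

definition Pres :: "nat \<Rightarrow> real mat" where
  "Pres j = (SOME P. orth_proj n P (col_space ((1\<^sub>m n - Pm) * X j)))"

lemma orth_proj_Pres:
  assumes j: "j \<in> {1..m}"
  shows "orth_proj n (Pres j) (col_space ((1\<^sub>m n - Pm) * X j))"
proof -
  have "(1\<^sub>m n - Pm) * X j \<in> carrier_mat n (a j)"
    using mult_carrier_mat[OF minus_carrier_mat[OF Pm_carrier] X_carrier[OF j]] .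
  thus ?thesis unfolding Pres_def by (rule someI_ex[OF orth_proj_col_space_exists])
qed

lemma Pres_carrier: "j \<in> {1..m} \<Longrightarrow> Pres j \<in> carrier_mat n n"
  using orth_proj_carrier[OF orth_proj_Pres] .

lemma Pres_range:
  assumes j: "j \<in> {1..m}" and v: "v \<in> carrier_vec n"
  obtains b where "b \<in> carrier_vec (a j)" "Pres j *\<^sub>v v = X j *\<^sub>v b - Pm *\<^sub>v (X j *\<^sub>v b)"
proof -
  have "Pres j *\<^sub>v v \<in> col_space ((1\<^sub>m n - Pm) * X j)" by (rule orth_proj_range[OF orth_proj_Pres[OF j] v])
  then obtain b where "b \<in> carrier_vec (a j)" "Pres j *\<^sub>v v = ((1\<^sub>m n - Pm) * X j) *\<^sub>v b"
    unfolding col_space_def using X_carrier[OF j] by auto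
  thus ?thesis using that one_minus_mult_mult_vec[OF Pm_carrier X_carrier[OF j]] by simp
qed

lemma transpose_Xm_Pres:
  assumes j: "j \<in> {1..m}" and v: "v \<in> carrier_vec n"
  shows "transpose_mat (X m) *\<^sub>v (Pres j *\<^sub>v v) = 0\<^sub>v (a m)"
proof -
  obtain b where b: "b \<in> carrier_vec (a j)" and eq: "Pres j *\<^sub>v v = X j *\<^sub>v b - Pm *\<^sub>v (X j *\<^sub>v b)"
    using Pres_range[OF j v] .
  show ?thesis unfolding eq by (rule transpose_Xm_resid_Pm) (use X_carrier[OF j] b in simp)
qed

lemma Pm_Pres:
  assumes j: "j \<in> {1..m}" and v: "v \<in> carrier_vec n"
  shows "Pm *\<^sub>v (Pres j *\<^sub>v v) = 0\<^sub>v n"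
  unfolding Pm_mult_vec[OF mult_mat_vec_carrier[OF Pres_carrier[OF j] v]] transpose_Xm_Pres[OF j v]
  using mult_mat_zero_vec[OF X_carrier[OF last_factor]] mult_mat_zero_vec[OF Rm_inv_carrier] by simp

text \<open>The only use of orthogonality through the last factor: it states
  X_i'(I - P_m) X_j = 0, so the adjusted column spaces of distinct factors are orthogonal.\<close>

lemma transpose_X_Pres_other:
  assumes i: "i \<in> {1..m-1}" and j: "j \<in> {1..m-1}" and ij: "i \<noteq> j" and v: "v \<in> carrier_vec n"
  shows "transpose_mat (X i) *\<^sub>v (Pres j *\<^sub>v v) = 0\<^sub>v (a i)"
proof -
  have i': "i \<in> {1..m}" and j': "j \<in> {1..m}" using i j by auto
  obtain b where b: "b \<in> carrier_vec (a j)" and eq: "Pres j *\<^sub>v v = X j *\<^sub>v b - Pm *\<^sub>v (X j *\<^sub>v b)"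
    using Pres_range[OF j' v] .
  have Xb: "X j *\<^sub>v b \<in> carrier_vec n" using X_carrier[OF j'] b by simp
  have XiXb: "transpose_mat (X i) *\<^sub>v (X j *\<^sub>v b) = N i j *\<^sub>v b"
    unfolding Nmat_def using X_carrier[OF i'] X_carrier[OF j'] b by simp
  have "transpose_mat (X i) *\<^sub>v (Pm *\<^sub>v (X j *\<^sub>v b)) = (N i m * Rm_inv) *\<^sub>v (N m j *\<^sub>v b)"
    unfolding transpose_X_Pm[OF i' Xb] Nmat_def using X_carrier[OF last_factor] X_carrier[OF j'] b by simp
  also have "\<dots> = N i j *\<^sub>v b"
    unfolding orth_through_last[OF i j ij]
    by (rule assoc_mult_mat_vec[symmetric, OF mult_carrier_mat[OF N_carrier[OF i' last_factor] Rm_inv_carrier]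
          N_carrier[OF last_factor j'] b])
  finally show ?thesis unfolding eq
    using XiXb X_carrier[OF i'] Xb Pm_carrier N_carrier[OF i' j'] b
    by (simp add: mult_minus_distrib_mat_vec[of _ "a i" n])
qed

lemma transpose_X_resid_Pres:
  assumes j: "j \<in> {1..m}" and v: "v \<in> carrier_vec n"
  shows "transpose_mat (X j) *\<^sub>v (v - Pm *\<^sub>v v - Pres j *\<^sub>v v) = 0\<^sub>v (a j)"
proof (rule eq_vec_if_scalar_prod_eq)
  fix c :: "real vec" assume c: "c \<in> carrier_vec (a j)"
  define x where "x = X j *\<^sub>v c"
  define p where "p = Pres j *\<^sub>v v"
  have xc: "x \<in> carrier_vec n" unfolding x_def using X_carrier[OF j] c by simp
  have pc: "p \<in> carrier_vec n" unfolding p_def using Pres_carrier[OF j] v by simp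
  have "((1\<^sub>m n - Pm) * X j) *\<^sub>v c \<in> col_space ((1\<^sub>m n - Pm) * X j)"
    by (rule mult_mem_col_space) (use ncols_factor[OF j] c in simp)
  hence "(v - p) \<bullet> (x - Pm *\<^sub>v x) = 0"
    using orth_proj_orth[OF orth_proj_Pres[OF j] v] one_minus_mult_mult_vec[OF Pm_carrier X_carrier[OF j] c] unfolding p_def x_def by simp
  hence "(v - p) \<bullet> x = (v - p) \<bullet> (Pm *\<^sub>v x)"
    using Pm_carrier xc pc v by (simp add: scalar_prod_minus_distrib[of _ n])
  also have "\<dots> = (Pm *\<^sub>v (v - p)) \<bullet> x"
    using orth_proj_scalar_prod_sym[OF orth_proj_Pm xc, of "v - p"] pc v by simp
  also have "Pm *\<^sub>v (v - p) = Pm *\<^sub>v v"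
    using Pm_Pres[OF j v] Pm_carrier pc v unfolding p_def[symmetric] by (simp add: mult_minus_distrib_mat_vec[of _ n n])
  finally have "(v - p) \<bullet> x = (Pm *\<^sub>v v) \<bullet> x" .
  moreover have "(transpose_mat (X j) *\<^sub>v (v - Pm *\<^sub>v v - p)) \<bullet> c = (v - Pm *\<^sub>v v - p) \<bullet> x"
    unfolding x_def by (rule transpose_vec_mult_scalar[OF X_carrier[OF j] c]) (use Pm_carrier pc v in simp)
  moreover have "v - Pm *\<^sub>v v - p = (v - p) - Pm *\<^sub>v v"
    by (rule eq_vecI) (use Pm_carrier pc v in auto)
  ultimately show "(transpose_mat (X j) *\<^sub>v (v - Pm *\<^sub>v v - Pres j *\<^sub>v v)) \<bullet> c = 0\<^sub>v (a j) \<bullet> c"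
    using Pm_carrier pc v xc c unfolding p_def[symmetric] by (simp add: minus_scalar_prod_distrib[of _ n])
qed (use ncols_factor[OF j] in \<open>auto intro: carrier_vecI\<close>)

definition Psum :: "nat set \<Rightarrow> real mat" where
  "Psum J = mat n n (\<lambda>(u, w). Pm $$ (u, w) + (\<Sum>j\<in>J. Pres j $$ (u, w)))"

lemma Psum_carrier: "Psum J \<in> carrier_mat n n"
  unfolding Psum_def by simp

lemma Psum_mult_vec:
  assumes J: "J \<subseteq> {1..m}" and v: "v \<in> carrier_vec n"
  shows "Psum J *\<^sub>v v = Pm *\<^sub>v v + sum_vec n J (\<lambda>j. Pres j *\<^sub>v v)"
proof (rule eq_vecI)
  fix u assume "u < dim_vec (Pm *\<^sub>v v + sum_vec n J (\<lambda>j. Pres j *\<^sub>v v))"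
  hence u: "u < n" using Pm_carrier by (simp add: sum_vec_def)
  have Pres: "(Pres j *\<^sub>v v) $ u = (\<Sum>w\<in>{0..<n}. Pres j $$ (u, w) * v $ w)" if "j \<in> J" for j
    using Pres_carrier[of j] that J u v by (auto simp: scalar_prod_def)
  have "(Psum J *\<^sub>v v) $ u = (\<Sum>w\<in>{0..<n}. Pm $$ (u, w) * v $ w) + (\<Sum>j\<in>J. \<Sum>w\<in>{0..<n}. Pres j $$ (u, w) * v $ w)"
    unfolding Psum_def using u v
    by (simp add: scalar_prod_def distrib_right sum.distrib sum_distrib_right sum.swap[of _ J])
  also have "\<dots> = (Pm *\<^sub>v v + sum_vec n J (\<lambda>j. Pres j *\<^sub>v v)) $ u"
    using Pm_carrier Pres u v by (simp add: sum_vec_def scalar_prod_def)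
  finally show "(Psum J *\<^sub>v v) $ u = (Pm *\<^sub>v v + sum_vec n J (\<lambda>j. Pres j *\<^sub>v v)) $ u" .
qed (use Pm_carrier in \<open>simp add: Psum_def sum_vec_def\<close>)

lemma transpose_X_resid_Psum:
  assumes i: "i \<in> {1..m}" and J: "J \<subseteq> {1..m}" and v: "v \<in> carrier_vec n"
  shows "transpose_mat (X i) *\<^sub>v (v - Psum J *\<^sub>v v) =
     transpose_mat (X i) *\<^sub>v (v - Pm *\<^sub>v v) - sum_vec (a i) J (\<lambda>j. transpose_mat (X i) *\<^sub>v (Pres j *\<^sub>v v))"
proof -
  have XiT: "transpose_mat (X i) \<in> carrier_mat (a i) n" using X_carrier[OF i] by simp
  have Pres: "\<And>j. j \<in> J \<Longrightarrow> Pres j *\<^sub>v v \<in> carrier_vec n"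
    using Pres_carrier J v by (blast intro: mult_mat_vec_carrier)
  have "v - Psum J *\<^sub>v v = (v - Pm *\<^sub>v v) - sum_vec n J (\<lambda>j. Pres j *\<^sub>v v)"
    unfolding Psum_mult_vec[OF J v] by (rule eq_vecI) (use v Pm_carrier in \<open>auto simp: sum_vec_def\<close>)
  thus ?thesis
    using mult_sum_vec[of "transpose_mat (X i)" "a i" n J "\<lambda>j. Pres j *\<^sub>v v"] XiT Pres Pm_carrier v
    by (simp add: mult_minus_distrib_mat_vec[of _ "a i" n])
qed

lemma Psum_mult_mem_colspace:
  assumes J: "J \<subseteq> {1..m-1}" and v: "v \<in> carrier_vec n"
  shows "Psum J *\<^sub>v v \<in> colspace n m a lev (J \<union> {m, Suc m})"
proof -
  let ?W = "colspace n m a lev (J \<union> {m, Suc m})"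
  have W: "subspace_vec n ?W" by (rule subspace_colspace)
  have fin: "finite J" using J finite_subset by blast
  have Jm: "J \<subseteq> {1..m}" using J by (auto simp: subset_iff)
  have X_mem: "X j *\<^sub>v b \<in> ?W" if "j \<in> J \<union> {m}" "b \<in> carrier_vec (a j)" for j b
    by (rule Xd_mult_mem_colspace) (use that fin Jm ncols_factor[of j] last_factor in auto)
  have Pm_mem: "Pm *\<^sub>v w \<in> ?W" if "w \<in> carrier_vec n" for w
    unfolding Pm_mult_vec[OF that] by (rule X_mem) (use that Rm_inv_carrier X_carrier[OF last_factor] in auto)
  have "Pres j *\<^sub>v v \<in> ?W" if j: "j \<in> J" for j
proof -
    obtain b where b: "b \<in> carrier_vec (a j)" and eq: "Pres j *\<^sub>v v = X j *\<^sub>v b - Pm *\<^sub>v (X j *\<^sub>v b)"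
      using Pres_range[of j v] j Jm v by blast
    show ?thesis unfolding eq
      by (rule subspace_vec_minus[OF W X_mem Pm_mem]) (use j b X_carrier[of j] Jm in auto)
  qed
  hence "sum_vec n J (\<lambda>j. Pres j *\<^sub>v v) \<in> ?W" by (rule sum_vec_mem_subspace[OF W fin])
  thus ?thesis unfolding Psum_mult_vec[OF Jm v] using subspace_vecD(3)[OF W] Pm_mem[OF v] by blast
qed

lemma transpose_X_resid_Psum_eq_0:
  assumes J: "J \<subseteq> {1..m-1}" and j: "j \<in> J \<union> {m, Suc m}" and v: "v \<in> carrier_vec n"
  shows "transpose_mat (X j) *\<^sub>v (v - Psum J *\<^sub>v v) = 0\<^sub>v (ncols m a j)"
proof -
  have Jm: "J \<subseteq> {1..m}" using J by (auto simp: subset_iff)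
  have fin: "finite J" using J finite_subset by blast
  have resid: "v - Psum J *\<^sub>v v \<in> carrier_vec n" using Psum_carrier[of J] v by simp
  have "sum_vec (a m) J (\<lambda>j. transpose_mat (X m) *\<^sub>v (Pres j *\<^sub>v v)) = 0\<^sub>v (a m)"
    by (rule sum_vec_eq_0) (use transpose_Xm_Pres Jm v in auto)
  hence last: "transpose_mat (X m) *\<^sub>v (v - Psum J *\<^sub>v v) = 0\<^sub>v (a m)"
    unfolding transpose_X_resid_Psum[OF last_factor Jm v] transpose_Xm_resid_Pm[OF v] by simp
  consider "j = m" | "j = Suc m" | "j \<in> J" "j \<in> {1..m-1}" using j J by auto
  thus ?thesis
  proof cases
    case 1
    thus ?thesis using last ncols_factor[OF last_factor] by simp
  next
    case 2
    thus ?thesis using transpose_Xmean_eq_0[OF resid last] by (simp add: ncols_def)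
  next
    case 3
    hence j': "j \<in> {1..m}" by auto
    have "sum_vec (a j) J (\<lambda>i. transpose_mat (X j) *\<^sub>v (Pres i *\<^sub>v v)) = transpose_mat (X j) *\<^sub>v (Pres j *\<^sub>v v)"
      by (rule sum_vec_eq_single[OF fin 3(1)])
        (use ncols_factor[OF j'] transpose_X_Pres_other[OF 3(2) _ _ v] J in \<open>auto intro: carrier_vecI\<close>)
    hence "transpose_mat (X j) *\<^sub>v (v - Psum J *\<^sub>v v) = transpose_mat (X j) *\<^sub>v (v - Pm *\<^sub>v v - Pres j *\<^sub>v v)"
      unfolding transpose_X_resid_Psum[OF j' Jm v]
      using X_carrier[OF j'] Pm_carrier Pres_carrier[OF j'] v
      by (simp add: mult_minus_distrib_mat_vec[of _ "a j" n])
    thus ?thesis using transpose_X_resid_Pres[OF j' v] ncols_factor[OF j'] by simp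
  qed
qed

lemma Proj_eq_Psum:
  assumes J: "J \<subseteq> {1..m-1}"
  shows "Proj n m a lev (J \<union> {m, Suc m}) = Psum J"
  by (intro Proj_eq orth_proj_colspaceI Psum_carrier Psum_mult_mem_colspace[OF J]
      transpose_X_resid_Psum_eq_0[OF J])

lemma Proj_compl_eq_Psum:
  assumes i: "i \<in> {1..m-1}"
  shows "Proj n m a lev ({1..Suc m} - {i}) = Psum ({1..m-1} - {i})"
proof -
  have "{1..Suc m} - {i} = ({1..m-1} - {i}) \<union> {m, Suc m}" using i two_factors by auto
  thus ?thesis using Proj_eq_Psum[of "{1..m-1} - {i}"] by auto
qed

lemma transpose_X_resid_compl:
  assumes i: "i \<in> {1..m-1}" and y: "y \<in> carrier_vec n"
  shows "transpose_mat (X i) *\<^sub>v ((1\<^sub>m n - Proj n m a lev ({1..Suc m} - {i})) *\<^sub>v y) =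
     transpose_mat (X i) *\<^sub>v y - (N i m * Rm_inv) *\<^sub>v (transpose_mat (X m) *\<^sub>v y)"
proof -
  let ?J = "{1..m-1} - {i}"
  have i': "i \<in> {1..m}" and J: "?J \<subseteq> {1..m}" using i by auto
  have "sum_vec (a i) ?J (\<lambda>j. transpose_mat (X i) *\<^sub>v (Pres j *\<^sub>v y)) = 0\<^sub>v (a i)"
    by (rule sum_vec_eq_0) (use transpose_X_Pres_other[OF i _ _ y] in auto)
  hence "transpose_mat (X i) *\<^sub>v (y - Psum ?J *\<^sub>v y) = transpose_mat (X i) *\<^sub>v (y - Pm *\<^sub>v y)"
    unfolding transpose_X_resid_Psum[OF i' J y] using X_carrier[OF i'] Pm_carrier y by simp
  thus ?thesis
    unfolding Proj_compl_eq_Psum[OF i] one_minus_mult_vec[OF Psum_carrier y] transpose_X_Pm[OF i' y, symmetric]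
    using X_carrier[OF i'] Pm_carrier y by (simp add: mult_minus_distrib_mat_vec[of _ "a i" n])
qed

lemma Cmat_compl:
  assumes i: "i \<in> {1..m-1}"
  shows "Cmat n m a lev i ({1..Suc m} - {i}) =
    Rmat n m a lev i - N i m * Rm_inv * transpose_mat (N i m)"
proof (rule eq_mat_if_mult_vec_eq)
  let ?P = "Proj n m a lev ({1..Suc m} - {i})"
  have i': "i \<in> {1..m}" using i by auto
  have Xi: "X i \<in> carrier_mat n (a i)" by (rule X_carrier[OF i'])
  have P: "1\<^sub>m n - ?P \<in> carrier_mat n n"
    unfolding Proj_compl_eq_Psum[OF i] by (rule minus_carrier_mat[OF Psum_carrier])
  have NRN: "N i m * Rm_inv * transpose_mat (N i m) \<in> carrier_mat (a i) (a i)"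
    using N_carrier[OF i' last_factor] Rm_inv_carrier by simp
  show "Cmat n m a lev i ({1..Suc m} - {i}) \<in> carrier_mat (a i) (a i)"
    unfolding Cmat_def using Xi P by simp
  show "Rmat n m a lev i - N i m * Rm_inv * transpose_mat (N i m) \<in> carrier_mat (a i) (a i)"
    by (rule minus_carrier_mat[OF NRN])
  fix c :: "real vec" assume c: "c \<in> carrier_vec (a i)"
  have Xc: "X i *\<^sub>v c \<in> carrier_vec n" using Xi c by simp
  have XiXi: "transpose_mat (X i) *\<^sub>v (X i *\<^sub>v c) = Rmat n m a lev i *\<^sub>v c"
    using Xi c by (simp add: N_diag[OF i', symmetric] Nmat_def)
  have XmXi: "transpose_mat (X m) *\<^sub>v (X i *\<^sub>v c) = transpose_mat (N i m) *\<^sub>v c"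
    unfolding transpose_N[OF i' last_factor] unfolding Nmat_def using X_carrier[OF last_factor] Xi c by simp
  have "Cmat n m a lev i ({1..Suc m} - {i}) *\<^sub>v c = transpose_mat (X i) *\<^sub>v ((1\<^sub>m n - ?P) *\<^sub>v (X i *\<^sub>v c))"
    unfolding Cmat_def by (rule mult3_mat_vec[OF _ P Xi c]) (use Xi in simp)
  also have "\<dots> = Rmat n m a lev i *\<^sub>v c - (N i m * Rm_inv) *\<^sub>v (transpose_mat (N i m) *\<^sub>v c)"
    unfolding transpose_X_resid_compl[OF i Xc] XiXi XmXi ..
  also have "(N i m * Rm_inv) *\<^sub>v (transpose_mat (N i m) *\<^sub>v c) = (N i m * Rm_inv * transpose_mat (N i m)) *\<^sub>v c"
    using N_carrier[OF i' last_factor] Rm_inv_carrier c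
    by (intro assoc_mult_mat_vec[symmetric, of _ "a i" "a m"]) auto
  also have "Rmat n m a lev i *\<^sub>v c - \<dots> = (Rmat n m a lev i - N i m * Rm_inv * transpose_mat (N i m)) *\<^sub>v c"
    using NRN c ncols_factor[OF i'] by (simp add: minus_mult_distrib_mat_vec[of _ "a i" "a i"] Rmat_def)
  finally show "Cmat n m a lev i ({1..Suc m} - {i}) *\<^sub>v c =
      (Rmat n m a lev i - N i m * Rm_inv * transpose_mat (N i m)) *\<^sub>v c" .
qed

lemma Qvec_compl:
  assumes i: "i \<in> {1..m-1}" and Y: "Y \<in> carrier_vec n"
  shows "Qvec n m a lev Y i ({1..Suc m} - {i}) =
    Tvec n m a lev Y i - N i m * Rm_inv *\<^sub>v Tvec n m a lev Y m"
  unfolding Qvec_def Tvec_def by (rule transpose_X_resid_compl[OF i Y])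

lemma Proj_last_eq_Pm: "Proj n m a lev {m, Suc m} = Pm"
  by (rule Proj_eq[OF orth_proj_Pm])

lemma SSfac_factor:
  assumes j: "j \<in> {1..m-1}" and Y: "Y \<in> carrier_vec n"
  shows "SSfac n m a lev Y j {m, Suc m} = Y \<bullet> (Pres j *\<^sub>v Y)"
  using j orth_proj_Pres[of j]
  by (intro SSfac_eq_orth_proj[OF _ Y]) (auto simp: Proj_last_eq_Pm orth_proj_Pm)

lemma SSE_eq:
  assumes Y: "Y \<in> carrier_vec n"
  shows "SSE n m a lev Y = Y \<bullet> Y - Y \<bullet> (Pm *\<^sub>v Y) - (\<Sum>j\<in>{1..m-1}. Y \<bullet> (Pres j *\<^sub>v Y))"
proof -
  have J: "{1..m-1} \<subseteq> {1..m}" by auto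
  have "{1..Suc m} = {1..m-1} \<union> {m, Suc m}" using two_factors by auto
  hence "Proj n m a lev {1..Suc m} = Psum {1..m-1}" using Proj_eq_Psum[of "{1..m-1}"] by simp
  hence "SSE n m a lev Y = Y \<bullet> (Y - (Pm *\<^sub>v Y + sum_vec n {1..m-1} (\<lambda>j. Pres j *\<^sub>v Y)))"
    unfolding SSE_def using one_minus_mult_vec[OF Psum_carrier Y] Psum_mult_vec[OF J Y] by simp
  also have "\<dots> = Y \<bullet> Y - Y \<bullet> (Pm *\<^sub>v Y) - Y \<bullet> sum_vec n {1..m-1} (\<lambda>j. Pres j *\<^sub>v Y)"
    using Y Pm_carrier by (simp add: scalar_prod_minus_distrib[of _ n] scalar_prod_add_distrib[of _ n])
  also have "Y \<bullet> sum_vec n {1..m-1} (\<lambda>j. Pres j *\<^sub>v Y) = (\<Sum>j\<in>{1..m-1}. Y \<bullet> (Pres j *\<^sub>v Y))"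
    by (rule scalar_prod_sum_vec[OF Y]) (use Pres_carrier Y J in \<open>blast intro: mult_mat_vec_carrier\<close>)
  finally show ?thesis .
qed

definition Pmean :: "real mat" where
  "Pmean = mat n n (\<lambda>_. 1 / real n)"

lemma Pmean_carrier: "Pmean \<in> carrier_mat n n"
  unfolding Pmean_def by simp

lemma Pmean_mult_vec:
  assumes z: "z \<in> carrier_vec n"
  shows "Pmean *\<^sub>v z = X (Suc m) *\<^sub>v vec 1 (\<lambda>_. (\<Sum>u\<in>{0..<n}. z $ u) / real n)"
  by (rule eq_vecI) (use z in \<open>auto simp: Pmean_def Xd_def ncols_def scalar_prod_def sum_divide_distrib\<close>)

lemma Pmean_mult_mem_colspace:
  assumes z: "z \<in> carrier_vec n" and S: "finite S" "Suc m \<in> S"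
  shows "Pmean *\<^sub>v z \<in> colspace n m a lev S"
  unfolding Pmean_mult_vec[OF z] by (rule Xd_mult_mem_colspace[OF S]) (simp add: ncols_def)

lemma orth_proj_Pmean: "orth_proj n Pmean (colspace n m a lev {Suc m})"
proof (rule orth_proj_colspaceI[OF Pmean_carrier])
  fix v :: "real vec" assume v: "v \<in> carrier_vec n"
  show "Pmean *\<^sub>v v \<in> colspace n m a lev {Suc m}" by (rule Pmean_mult_mem_colspace[OF v]) auto
  let ?s = "\<Sum>u\<in>{0..<n}. v $ u"
  have "(v - Pmean *\<^sub>v v) $ u = v $ u - ?s / real n" if "u < n" for u
    using that v by (simp add: Pmean_def scalar_prod_def sum_divide_distrib)
  hence "(\<Sum>u\<in>{0..<n}. (v - Pmean *\<^sub>v v) $ u) = ?s - real n * (?s / real n)"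
    by (simp add: sum_subtractf)
  also have "\<dots> = 0" by (cases "n = 0") auto
  finally have "(\<Sum>u\<in>{0..<n}. (v - Pmean *\<^sub>v v) $ u) = 0" .
  moreover fix j assume "j \<in> {Suc m}"
  ultimately show "transpose_mat (X j) *\<^sub>v (v - Pmean *\<^sub>v v) = 0\<^sub>v (ncols m a j)"
    using transpose_Xd_mean_mult_vec[of "v - Pmean *\<^sub>v v" n m a lev] Pmean_carrier v
    by (auto simp: ncols_def intro!: eq_vecI)
qed

lemma Pmean_Pm:
  assumes v: "v \<in> carrier_vec n"
  shows "Pmean *\<^sub>v (Pm *\<^sub>v v) = Pmean *\<^sub>v v"
proof -
  have r: "v - Pm *\<^sub>v v \<in> carrier_vec n" using Pm_carrier v by simp
  have "(\<Sum>u\<in>{0..<n}. (v - Pm *\<^sub>v v) $ u) = 0"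
proof -
    have "vec 1 (\<lambda>_. \<Sum>u\<in>{0..<n}. (v - Pm *\<^sub>v v) $ u) = 0\<^sub>v 1"
      using transpose_Xmean_eq_0[OF r transpose_Xm_resid_Pm[OF v]] transpose_Xd_mean_mult_vec[OF r] by simp
    from arg_cong[OF this, of "\<lambda>x. x $ 0"] show ?thesis by simp
  qed
  hence "(\<Sum>u\<in>{0..<n}. (Pm *\<^sub>v v) $ u) = (\<Sum>u\<in>{0..<n}. v $ u)"
    using Pm_carrier v by (simp add: sum_subtractf)
  thus ?thesis unfolding Pmean_mult_vec[OF v] Pmean_mult_vec[OF mult_mat_vec_carrier[OF Pm_carrier v]] by simp
qed

lemma orth_proj_Pm_minus_Pmean: "orth_proj n (Pm - Pmean) (col_space ((1\<^sub>m n - Pmean) * X m))"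
  unfolding orth_proj_def
proof (intro conjI ballI)
  have Xm: "X m \<in> carrier_mat n (a m)" by (rule X_carrier[OF last_factor])
  note resid_X = one_minus_mult_mult_vec[OF Pmean_carrier Xm]
  show "Pm - Pmean \<in> carrier_mat n n" by (rule minus_carrier_mat[OF Pmean_carrier])
  fix v :: "real vec" assume v: "v \<in> carrier_vec n"
  define b where "b = Rm_inv *\<^sub>v (transpose_mat (X m) *\<^sub>v v)"
  have b: "b \<in> carrier_vec (a m)" unfolding b_def using Rm_inv_carrier Xm v by simp
  have Xb: "X m *\<^sub>v b = Pm *\<^sub>v v" unfolding b_def Pm_mult_vec[OF v] ..
  have "(Pm - Pmean) *\<^sub>v v = ((1\<^sub>m n - Pmean) * X m) *\<^sub>v b"
    unfolding resid_X[OF b] Xb Pmean_Pm[OF v]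
    using Pm_carrier Pmean_carrier v by (simp add: minus_mult_distrib_mat_vec[of _ n n])
  thus "(Pm - Pmean) *\<^sub>v v \<in> col_space ((1\<^sub>m n - Pmean) * X m)"
    using mult_mem_col_space[of b] b ncols_factor[OF last_factor] by simp
  fix w assume "w \<in> col_space ((1\<^sub>m n - Pmean) * X m)"
  then obtain c where c: "c \<in> carrier_vec (a m)" and w: "w = ((1\<^sub>m n - Pmean) * X m) *\<^sub>v c"
    unfolding col_space_def using ncols_factor[OF last_factor] by auto
  define x where "x = X m *\<^sub>v c"
  have x: "x \<in> carrier_vec n" unfolding x_def using Xm c by simp
  have Pmv: "Pm *\<^sub>v v \<in> carrier_vec n" and Pmeanv: "Pmean *\<^sub>v v \<in> carrier_vec n"
    and Pmeanx: "Pmean *\<^sub>v x \<in> carrier_vec n" using Pm_carrier Pmean_carrier v x by auto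
  have "x \<in> colspace n m a lev {m, Suc m}"
    unfolding x_def by (rule Xd_mult_mem_colspace) (use c ncols_factor[OF last_factor] in auto)
  hence 1: "(v - Pm *\<^sub>v v) \<bullet> x = 0" by (rule orth_proj_orth[OF orth_proj_Pm v])
  have "Pmean *\<^sub>v x \<in> colspace n m a lev {m, Suc m}" by (rule Pmean_mult_mem_colspace[OF x]) auto
  hence 2: "(v - Pm *\<^sub>v v) \<bullet> (Pmean *\<^sub>v x) = 0" by (rule orth_proj_orth[OF orth_proj_Pm v])
  have "(x - Pmean *\<^sub>v x) \<bullet> (Pmean *\<^sub>v v) = 0"
    by (rule orth_proj_orth[OF orth_proj_Pmean x Pmean_mult_mem_colspace[OF v]]) auto
  hence 3: "(Pmean *\<^sub>v v) \<bullet> (x - Pmean *\<^sub>v x) = 0"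
    using comm_scalar_prod[of "Pmean *\<^sub>v v" n "x - Pmean *\<^sub>v x"] Pmeanv x Pmeanx by simp
  have "v - (Pm - Pmean) *\<^sub>v v = (v - Pm *\<^sub>v v) + Pmean *\<^sub>v v"
    using Pm_carrier Pmean_carrier v by (auto simp: minus_mult_distrib_mat_vec[of _ n n] intro!: eq_vecI)
  moreover have "w = x - Pmean *\<^sub>v x" unfolding w x_def by (rule resid_X[OF c])
  ultimately show "(v - (Pm - Pmean) *\<^sub>v v) \<bullet> w = 0"
    using 1 2 3 v x Pmv Pmeanv Pmeanx
    by (simp add: add_scalar_prod_distrib[of _ n] scalar_prod_minus_distrib[of _ n])
qed

lemma SSfac_last:
  assumes Y: "Y \<in> carrier_vec n"
  shows "SSfac n m a lev Y m {Suc m} = Y \<bullet> (Pm *\<^sub>v Y) - Y \<bullet> (Pmean *\<^sub>v Y)"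
proof -
  have P: "Proj n m a lev {Suc m} = Pmean" by (rule Proj_eq[OF orth_proj_Pmean])
  have "SSfac n m a lev Y m {Suc m} = Y \<bullet> ((Pm - Pmean) *\<^sub>v Y)"
    using orth_proj_Pm_minus_Pmean by (intro SSfac_eq_orth_proj[OF _ Y]) (simp_all add: P orth_proj_Pmean)
  thus ?thesis using Pm_carrier Pmean_carrier Y
    by (simp add: minus_mult_distrib_mat_vec[of _ n n] scalar_prod_minus_distrib[of _ n])
qed

lemma SStot_eq:
  assumes Y: "Y \<in> carrier_vec n"
  shows "SStot n Y = Y \<bullet> Y - Y \<bullet> (Pmean *\<^sub>v Y)"
proof -
  have "Y \<bullet> (Pmean *\<^sub>v Y) = (\<Sum>u<n. Y $ u) * (\<Sum>u<n. Y $ u) / real n"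
    using Y by (simp add: Pmean_def scalar_prod_def sum_divide_distrib[symmetric] sum_distrib_right
        atLeast0LessThan mult.commute)
  thus ?thesis using Y unfolding SStot_def by (simp add: scalar_prod_def power2_eq_square atLeast0LessThan)
qed

lemma SSE_decomposition:
  assumes Y: "Y \<in> carrier_vec n"
  shows "SSE n m a lev Y =
    SStot n Y - (\<Sum>j\<in>{1..m-1}. SSfac n m a lev Y j {m, Suc m}) - SSfac n m a lev Y m {Suc m}"
  using SSE_eq[OF Y] SStot_eq[OF Y] SSfac_last[OF Y] SSfac_factor[OF _ Y] by simp

end

theorem theorem4p5:
  fixes n m :: nat and a :: "nat \<Rightarrow> nat" and lev :: "nat \<Rightarrow> nat \<Rightarrow> nat" and Y :: "real vec"
  assumes m2: "m \<ge> 2"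
    and lev_range: "\<And>i u. i \<in> {1..m} \<Longrightarrow> u < n \<Longrightarrow> lev i u < a i"
    and all_levels: "\<And>i t. i \<in> {1..m} \<Longrightarrow> t < a i \<Longrightarrow> \<exists>u<n. lev i u = t"
    and Y: "Y \<in> carrier_vec n"
    and orth: "\<And>i j. i \<in> {1..m-1} \<Longrightarrow> j \<in> {1..m-1} \<Longrightarrow> i \<noteq> j \<Longrightarrow>
       Nmat n m a lev i j = Nmat n m a lev i m * Rinv n m a lev m * Nmat n m a lev m j"
  shows "(\<forall>i\<in>{1..m-1}.
            Cmat n m a lev i ({1..Suc m} - {i}) =
              Rmat n m a lev i - Nmat n m a lev i m * Rinv n m a lev m * transpose_mat (Nmat n m a lev i m)
          \<and> Qvec n m a lev Y i ({1..Suc m} - {i}) =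
              Tvec n m a lev Y i - Nmat n m a lev i m * Rinv n m a lev m *\<^sub>v Tvec n m a lev Y m)
       \<and> SSE n m a lev Y =
           SStot n Y - (\<Sum>j\<in>{1..m-1}. SSfac n m a lev Y j {m, Suc m}) - SSfac n m a lev Y m {Suc m}"
proof -
  interpret orthogonal_through_last_factor n m a lev
    using m2 lev_range all_levels orth by unfold_locales
  show ?thesis using Cmat_compl Qvec_compl[OF _ Y] SSE_decomposition[OF Y] by blast
qed

end
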